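(* Let $1<p<\infty$ and let $f\in L_1([-\pi,\pi])$ have Fourier series $\sum_{k\in\mathbb Z}a_ke^{ikx}$. If $I_p(f)<\infty$, then $f\in L_p([-\pi,\pi])$ and $$\|f\|_{L_p([-\pi,\pi])}\lesssim I_p(f),$$ with a constant depending only on $p$.
   Context: $p'=p/(p-1)$; $a_k=\frac1{2\pi}\int_{-\pi}^\pi f(x)e^{-ikx}dx$. Put $|\Delta a_k|=|a_k-a_{k+1}|$ for $k>0$, $|\Delta a_k|=|a_k-a_{k-1}|$ for $k<0$, $|\Delta a_0|=|a_0-a_1|+|a_0-a_{-1}|$; let $\Theta_k(f)=\sum_{[2^{k-1}]\le|m|<2^k}|\Delta a_m|$ for $k\ge0$ ($[\cdot]$ the floor function), and $I_p(f)=\big(\sum_{k=0}^\infty(2^{k/p'}\Theta_k(f))^p\big)^{1/p}$. *)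

theory Defs
  imports "HOL-Analysis.Analysis"
begin

definition fourier_coeff :: "(real \<Rightarrow> complex) \<Rightarrow> int \<Rightarrow> complex" where
  "fourier_coeff f k = complex_of_real (1 / (2 * pi)) *
     (LINT x : {-pi..pi} | lborel. f x * exp (- \<i> * of_int k * of_real x))"

definition delta_coeff :: "(real \<Rightarrow> complex) \<Rightarrow> int \<Rightarrow> real" where
  "delta_coeff f k =
     (if k > 0 then cmod (fourier_coeff f k - fourier_coeff f (k + 1))
      else if k < 0 then cmod (fourier_coeff f k - fourier_coeff f (k - 1))
      else cmod (fourier_coeff f 0 - fourier_coeff f 1) + cmod (fourier_coeff f 0 - fourier_coeff f (-1)))"

definition Theta :: "(real \<Rightarrow> complex) \<Rightarrow> nat \<Rightarrow> real" where
  "Theta f k = (\<Sum>m \<in> {m::int. \<lfloor>(2::real) powr (real k - 1)\<rfloor> \<le> \<bar>m\<bar> \<and> \<bar>m\<bar> < 2 ^ k}. delta_coeff f m)"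

definition conj_exp :: "real \<Rightarrow> real" where
  "conj_exp p = p / (p - 1)"

definition Ip_term :: "real \<Rightarrow> (real \<Rightarrow> complex) \<Rightarrow> nat \<Rightarrow> real" where
  "Ip_term p f k = (2 powr (real k / conj_exp p) * Theta f k) powr p"

definition Ip_finite :: "real \<Rightarrow> (real \<Rightarrow> complex) \<Rightarrow> bool" where
  "Ip_finite p f \<longleftrightarrow> summable (Ip_term p f)"

definition Ip :: "real \<Rightarrow> (real \<Rightarrow> complex) \<Rightarrow> real" where
  "Ip p f = (\<Sum>k. Ip_term p f k) powr (1 / p)"

definition in_Lp :: "real \<Rightarrow> (real \<Rightarrow> complex) \<Rightarrow> bool" where
  "in_Lp p f \<longleftrightarrow> f \<in> borel_measurable (restrict_space lborel {-pi..pi})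
      \<and> set_integrable lborel {-pi..pi} (\<lambda>x. cmod (f x) powr p)"

definition Lp_norm :: "real \<Rightarrow> (real \<Rightarrow> complex) \<Rightarrow> real" where
  "Lp_norm p f = (LINT x : {-pi..pi} | lborel. cmod (f x) powr p) powr (1 / p)"

end

theory Submission
  imports Defs
begin

(* Summation by parts turns the partial Fourier sum of f over |j| < 2^N, up to the boundary
   coefficients a(+-2^N), into sum_k sum_{n in k-th dyadic block} Delta a_n K_n(x), where
   K_n(x) is the sum of e^{ijx} over the integers j between 0 and n.  On the k-th block
   |K_n(x)| <= min (2^k) (4/|x|), so these sums converge for x <> 0 to a function G dominated by
   H(x) = sum_k Theta_k min (2^k) (4/|x|), and a discrete Hardy inequality (Schur's test with
   weights 2^(-|j-k| min(1/p, 1/p'))) bounds the integral of H^p by a constant times I_p(f)^p.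
   By dominated convergence the Fourier coefficients of f - G are constant for j >= 0 and for
   j < 0, so all Fourier coefficients of (f - G)(x) (1 - e^{ix}) but the zeroth vanish.  By
   uniqueness of Fourier coefficients (proved via Stone-Weierstrass) this function is a constant
   c almost everywhere, and c = 0 since c / (1 - e^{ix}) is not integrable otherwise.  Hence
   f = G almost everywhere and ||f||_p <= ||H||_p. *)

section \<open>Characters of the circle and trigonometric polynomials\<close>

definition fourier_exp :: "int \<Rightarrow> real \<Rightarrow> complex" where
  "fourier_exp k x = cis (of_int k * x)"

lemma continuous_on_fourier_exp [continuous_intros]: "continuous_on S (fourier_exp k)"
  unfolding fourier_exp_def by (intro continuous_intros)

lemma borel_measurable_fourier_exp [measurable]: "fourier_exp k \<in> borel_measurable borel"
  by (intro borel_measurable_continuous_onI continuous_on_fourier_exp)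

lemma fourier_exp_mult: "fourier_exp k x * fourier_exp l x = fourier_exp (k + l) x"
  unfolding fourier_exp_def by (simp add: cis_mult distrib_right)

lemma norm_fourier_exp [simp]: "norm (fourier_exp k x) = 1"
  by (simp add: fourier_exp_def)

lemma fourier_exp_0 [simp]: "fourier_exp 0 x = 1"
  by (simp add: fourier_exp_def)

lemma fourier_exp_nat_power: "fourier_exp 1 x ^ n = fourier_exp (int n) x"
  unfolding fourier_exp_def Complex.DeMoivre by simp

lemma fourier_exp_pi: "fourier_exp k pi = fourier_exp k (-pi)"
proof -
  have "fourier_exp k pi = cis (2 * pi * of_int k) * fourier_exp k (-pi)"
    unfolding fourier_exp_def cis_mult by (rule arg_cong[where f = cis]) (simp add: algebra_simps)
  then show ?thesis by simp
qed

lemma fourier_coeff_eq: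
  "fourier_coeff f k = (LINT x:{-pi..pi}|lborel. f x * fourier_exp (-k) x) / (2 * pi)"
  unfolding fourier_coeff_def fourier_exp_def cis_conv_exp by (simp add: mult.assoc)

lemma integral_fourier_exp:
  "(LINT x:{-pi..pi}|lborel. fourier_exp k x) = (if k = 0 then 2 * pi else 0)"
proof (cases "k = 0")
  case True
  then show ?thesis by (simp add: set_integral_const emeasure_lborel_Icc_eq scaleR_conv_of_real)
next
  case False
  define F where "F x = fourier_exp k x / (\<i> * of_int k)" for x
  have "(LINT x:{-pi..pi}|lborel. fourier_exp k x) = (LBINT x=-pi..pi. fourier_exp k x)"
    by (simp add: interval_integral_Icc)
  also have "\<dots> = F pi - F (-pi)"
  proof (rule interval_integral_FTC_finite)
    fix x :: real
    have "((\<lambda>z. exp (\<i> * of_int k * z) / (\<i> * of_int k)) has_field_derivative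
            exp (\<i> * of_int k * of_real x)) (at (of_real x))"
      using False by (auto intro!: derivative_eq_intros)
    from has_vector_derivative_real_field[OF this]
    show "(F has_vector_derivative fourier_exp k x) (at x within {min (- pi) pi..max (- pi) pi})"
      unfolding F_def fourier_exp_def cis_conv_exp by (simp add: mult.assoc)
  qed (intro continuous_intros)
  also have "\<dots> = 0"
    unfolding F_def by (simp add: fourier_exp_pi)
  finally show ?thesis using False by simp
qed

lemma set_integrable_mult_bounded:
  fixes h g :: "'a \<Rightarrow> complex"
  assumes h: "set_integrable M A h" and g: "g \<in> borel_measurable M"
    and bound: "\<And>x. norm (g x) \<le> B"
  shows "set_integrable M A (\<lambda>x. h x * g x)"
proof (rule set_integrable_bound[of M A "\<lambda>x. of_real B * h x"])
  show "set_integrable M A (\<lambda>x. of_real B * h x)"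
    using h by (intro set_integrable_mult_right)
  have "(\<lambda>x. indicator A x *\<^sub>R h x) \<in> borel_measurable M"
    using h unfolding set_integrable_def by (rule borel_measurable_integrable)
  then have "(\<lambda>x. (indicator A x *\<^sub>R h x) * g x) \<in> borel_measurable M"
    using g by measurable
  then show "set_borel_measurable M A (\<lambda>x. h x * g x)"
    unfolding set_borel_measurable_def by (simp add: mult.assoc)
  have "0 \<le> B" using bound[of undefined] norm_ge_zero order_trans by blast
  moreover have "norm (h x * g x) \<le> B * norm (h x)" for x
    unfolding norm_mult by (metis bound mult.commute mult_right_mono norm_ge_zero)
  ultimately show "AE x in M. x \<in> A \<longrightarrow> norm (h x * g x) \<le> norm (of_real B * h x)"
    by (simp add: norm_mult)
qed

lemma norm_set_integral_mult_bounded_le: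
  fixes h g :: "'a \<Rightarrow> complex"
  assumes h: "set_integrable M A h" and g: "g \<in> borel_measurable M"
    and bound: "\<And>x. norm (g x) \<le> B"
  shows "norm (LINT x:A|M. h x * g x) \<le> B * (LINT x:A|M. norm (h x))"
proof -
  have hg: "set_integrable M A (\<lambda>x. h x * g x)"
    by (rule set_integrable_mult_bounded[OF h g bound])
  have "norm (LINT x:A|M. h x * g x) \<le> (LINT x:A|M. norm (h x * g x))"
    by (rule set_integral_norm_bound[OF hg])
  also have "\<dots> \<le> (LINT x:A|M. B * norm (h x))"
  proof (intro set_integral_mono set_integrable_norm set_integrable_mult_right hg h)
    show "norm (h x * g x) \<le> B * norm (h x)" for x
      unfolding norm_mult by (metis bound mult.commute mult_right_mono norm_ge_zero)
  qed
  finally show ?thesis by simp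
qed

lemma set_integral_mult_fourier_exp:
  "(LINT x:{-pi..pi}|lborel. h x * fourier_exp k x) = 2 * pi * fourier_coeff h (-k)"
  unfolding fourier_coeff_eq by simp

lemma fourier_coeff_diff:
  assumes "set_integrable lborel {-pi..pi} f" "set_integrable lborel {-pi..pi} g"
  shows "fourier_coeff (\<lambda>x. f x - g x) k = fourier_coeff f k - fourier_coeff g k"
proof -
  have "set_integrable lborel {-pi..pi} (\<lambda>x. u x * fourier_exp (-k) x)"
    if "set_integrable lborel {-pi..pi} u" for u
    by (rule set_integrable_mult_bounded[OF that]) auto
  then show ?thesis
    unfolding fourier_coeff_eq using assms
    by (simp add: left_diff_distrib set_integral_diff(2) diff_divide_distrib)
qed

inductive trig_poly :: "(real \<Rightarrow> complex) \<Rightarrow> bool" where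
  trig_poly_monomial: "trig_poly (\<lambda>x. c * fourier_exp k x)"
| trig_poly_add: "trig_poly p \<Longrightarrow> trig_poly q \<Longrightarrow> trig_poly (\<lambda>x. p x + q x)"

lemma trig_poly_const: "trig_poly (\<lambda>x. c)"
  using trig_poly_monomial[of c 0] by simp

lemma trig_poly_mult:
  assumes "trig_poly p" "trig_poly q"
  shows "trig_poly (\<lambda>x. p x * q x)"
  using assms
proof (induction arbitrary: q rule: trig_poly.induct)
  case (trig_poly_monomial c k)
  from trig_poly_monomial.prems show ?case
  proof induction
    case (trig_poly_monomial d l)
    have "(\<lambda>x. c * fourier_exp k x * (d * fourier_exp l x)) = (\<lambda>x. (c * d) * fourier_exp (k + l) x)"
      by (simp add: fourier_exp_mult[symmetric] mult_ac)
    then show ?case by (simp add: trig_poly.trig_poly_monomial)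
  next
    case (trig_poly_add q1 q2)
    then show ?case by (simp add: distrib_left trig_poly.trig_poly_add)
  qed
next
  case (trig_poly_add p1 p2)
  then show ?case by (simp add: distrib_right trig_poly.trig_poly_add)
qed

lemma trig_poly_continuous_on: "trig_poly p \<Longrightarrow> continuous_on S p"
  by (induction rule: trig_poly.induct) (auto intro!: continuous_intros)

lemma trig_poly_borel_measurable: "trig_poly p \<Longrightarrow> p \<in> borel_measurable lborel"
  unfolding measurable_lborel2 by (intro borel_measurable_continuous_onI trig_poly_continuous_on)

lemma trig_poly_bounded: "trig_poly p \<Longrightarrow> \<exists>B. \<forall>x. norm (p x) \<le> B"
proof (induction rule: trig_poly.induct)
  case (trig_poly_monomial c k)
  have "norm (c * fourier_exp k x) \<le> norm c" for x
    by (simp add: norm_mult)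
  then show ?case by blast
next
  case (trig_poly_add p q)
  then obtain B C where "\<And>x. norm (p x) \<le> B" "\<And>x. norm (q x) \<le> C" by blast
  then have "norm (p x + q x) \<le> B + C" for x
    by (meson add_mono norm_triangle_le)
  then show ?case by blast
qed

lemma trig_poly_bounded_linear:
  assumes "bounded_linear f"
  shows "trig_poly (\<lambda>x. of_real (f (cis x)))"
proof -
  interpret bounded_linear f by fact
  have f_cis: "f (cis x) = cos x * f 1 + sin x * f \<i>" for x
  proof -
    have "cis x = cos x *\<^sub>R 1 + sin x *\<^sub>R \<i>"
      by (simp add: complex_eq_iff)
    then show ?thesis by (simp add: add scale)
  qed
  have "(\<lambda>x. of_real (f (cis x))) = (\<lambda>x. (f 1 - \<i> * f \<i>) / 2 * fourier_exp 1 x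
                                       + (f 1 + \<i> * f \<i>) / 2 * fourier_exp (-1) x)"
    unfolding f_cis by (intro ext) (simp add: fourier_exp_def complex_eq_iff field_simps)
  then show ?thesis by (metis trig_poly_add trig_poly_monomial)
qed

lemma trig_poly_real_polynomial_function:
  assumes "real_polynomial_function q"
  shows "trig_poly (\<lambda>x. of_real (q (cis x)))"
  using assms
proof induction
  case (linear f)
  then show ?case by (rule trig_poly_bounded_linear)
next
  case (const c)
  then show ?case by (rule trig_poly_const)
next
  case (add f g)
  then show ?case unfolding of_real_add by (intro trig_poly_add add.IH)
next
  case (mult f g)
  then show ?case unfolding of_real_mult by (intro trig_poly_mult mult.IH)
qed

section \<open>Uniqueness of Fourier coefficients\<close>

lemma set_integral_trig_poly_eq_0:
  assumes h: "set_integrable lborel {-pi..pi} h"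
    and orth: "\<And>k. (LINT x:{-pi..pi}|lborel. h x * fourier_exp k x) = 0"
    and "trig_poly p"
  shows "(LINT x:{-pi..pi}|lborel. h x * p x) = 0"
  using \<open>trig_poly p\<close>
proof induction
  case (trig_poly_monomial c k)
  have "(LINT x:{-pi..pi}|lborel. h x * (c * fourier_exp k x))
      = c * (LINT x:{-pi..pi}|lborel. h x * fourier_exp k x)"
    by (simp add: mult.left_commute[of _ c])
  then show ?case using orth by simp
next
  case (trig_poly_add p q)
  have integrable: "set_integrable lborel {-pi..pi} (\<lambda>x. h x * r x)" if r: "trig_poly r" for r
  proof -
    obtain B where "\<forall>x. norm (r x) \<le> B" using trig_poly_bounded[OF r] by blast
    then show ?thesis by (intro set_integrable_mult_bounded[OF h trig_poly_borel_measurable[OF r]]) blast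
  qed
  have "(LINT x:{-pi..pi}|lborel. h x * (p x + q x))
      = (LINT x:{-pi..pi}|lborel. h x * p x) + (LINT x:{-pi..pi}|lborel. h x * q x)"
    unfolding distrib_left
    by (rule set_integral_add(2)[OF integrable integrable]) (fact trig_poly_add.hyps)+
  then show ?case using trig_poly_add.IH by simp
qed

lemma norm_set_integral_continuous_on_circle_le:
  fixes \<phi> :: "complex \<Rightarrow> real"
  assumes h: "set_integrable lborel {-pi..pi} h"
    and orth: "\<And>k. (LINT x:{-pi..pi}|lborel. h x * fourier_exp k x) = 0"
    and cont: "continuous_on (sphere 0 1) \<phi>" and "0 < e"
  shows "norm (LINT x:{-pi..pi}|lborel. h x * of_real (\<phi> (cis x))) \<le> e * (LINT x:{-pi..pi}|lborel. norm (h x))"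
proof -
  obtain q where "polynomial_function q" and q: "\<And>z. z \<in> sphere 0 1 \<Longrightarrow> norm (\<phi> z - q z) < e"
    using Stone_Weierstrass_polynomial_function[OF compact_sphere cont \<open>0 < e\<close>] by blast
  then have tq: "trig_poly (\<lambda>x. of_real (q (cis x)))"
    by (simp add: real_polynomial_function_eq trig_poly_real_polynomial_function)
  obtain B where "\<forall>x. norm (of_real (q (cis x)) :: complex) \<le> B"
    using trig_poly_bounded[OF tq] by blast
  then have hq: "set_integrable lborel {-pi..pi} (\<lambda>x. h x * of_real (q (cis x)))"
    by (intro set_integrable_mult_bounded[OF h trig_poly_borel_measurable[OF tq]]) blast
  define r where "r x = complex_of_real (\<phi> (cis x)) - of_real (q (cis x))" for x
  have "continuous_on UNIV (\<lambda>x. \<phi> (cis x))"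
    by (rule continuous_on_compose2[OF cont continuous_on_cis]) auto
  then have "(\<lambda>x. \<phi> (cis x)) \<in> borel_measurable borel"
    by (rule borel_measurable_continuous_onI)
  then have r_meas: "r \<in> borel_measurable lborel"
    unfolding r_def using trig_poly_borel_measurable[OF tq] by measurable
  have r_le: "norm (r x) \<le> e" for x
    using q[of "cis x"] by (simp add: r_def less_imp_le flip: of_real_diff)
  have "(LINT x:{-pi..pi}|lborel. h x * of_real (\<phi> (cis x)))
      = (LINT x:{-pi..pi}|lborel. h x * r x + h x * of_real (q (cis x)))"
    unfolding r_def by (simp add: algebra_simps)
  also have "\<dots> = (LINT x:{-pi..pi}|lborel. h x * r x)"
    using set_integral_add(2)[OF set_integrable_mult_bounded[OF h r_meas r_le] hq]
          set_integral_trig_poly_eq_0[OF h orth tq]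
    by simp
  also have "norm \<dots> \<le> e * (LINT x:{-pi..pi}|lborel. norm (h x))"
    by (rule norm_set_integral_mult_bounded_le[OF h r_meas r_le])
  finally show ?thesis .
qed

lemma set_integral_continuous_on_circle_eq_0:
  fixes \<phi> :: "complex \<Rightarrow> real"
  assumes h: "set_integrable lborel {-pi..pi} h"
    and orth: "\<And>k. (LINT x:{-pi..pi}|lborel. h x * fourier_exp k x) = 0"
    and cont: "continuous_on (sphere 0 1) \<phi>"
  shows "(LINT x:{-pi..pi}|lborel. h x * of_real (\<phi> (cis x))) = 0"
proof -
  define A where "A = (LINT x:{-pi..pi}|lborel. norm (h x))"
  have "0 \<le> A"
    unfolding A_def set_lebesgue_integral_def by (rule Bochner_Integration.integral_nonneg) simp
  have "norm (LINT x:{-pi..pi}|lborel. h x * of_real (\<phi> (cis x))) \<le> 0 + e" if "0 < e" for e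
  proof -
    have "norm (LINT x:{-pi..pi}|lborel. h x * of_real (\<phi> (cis x))) \<le> e / (A + 1) * A"
      using norm_set_integral_continuous_on_circle_le[OF h orth cont, of "e / (A + 1)"] that \<open>0 \<le> A\<close>
      unfolding A_def by simp
    also have "\<dots> \<le> e"
      using that \<open>0 \<le> A\<close> by (simp add: field_simps)
    finally show ?thesis by simp
  qed
  then have "norm (LINT x:{-pi..pi}|lborel. h x * of_real (\<phi> (cis x))) \<le> 0"
    by (rule field_le_epsilon) simp
  then show ?thesis by simp
qed

lemma set_integral_eq_0_if_bounded_tendsto:
  fixes h :: "real \<Rightarrow> complex" and g :: "nat \<Rightarrow> real \<Rightarrow> real"
  assumes h: "set_integrable lborel A h"
    and g_meas: "\<And>n. g n \<in> borel_measurable borel" and G_meas: "G \<in> borel_measurable borel"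
    and g_bounded: "\<And>n x. \<bar>g n x\<bar> \<le> 1" and g_lim: "\<And>x. (\<lambda>n. g n x) \<longlonglongrightarrow> G x"
    and g_orth: "\<And>n. (LINT x:A|lborel. h x * of_real (g n x)) = 0"
  shows "(LINT x:A|lborel. h x * of_real (G x)) = 0"
proof -
  define H where "H x = indicator A x *\<^sub>R h x" for x
  have "integrable lborel H" using h unfolding set_integrable_def H_def .
  then have [measurable]: "H \<in> borel_measurable lborel"
    by (rule borel_measurable_integrable)
  have "(\<lambda>n. integral\<^sup>L lborel (\<lambda>x. H x * of_real (g n x))) \<longlonglongrightarrow> integral\<^sup>L lborel (\<lambda>x. H x * of_real (G x))"
  proof (rule integral_dominated_convergence[where w = "\<lambda>x. norm (H x)"])
    show "AE x in lborel. (\<lambda>n. H x * of_real (g n x)) \<longlonglongrightarrow> H x * of_real (G x)"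
      using g_lim by (intro AE_I2 tendsto_mult tendsto_of_real tendsto_const)
    show "AE x in lborel. norm (H x * of_real (g n x)) \<le> norm (H x)" for n
      using g_bounded by (intro AE_I2) (simp add: norm_mult mult_left_le)
  qed (use \<open>integrable lborel H\<close> g_meas G_meas in simp_all)
  moreover have "integral\<^sup>L lborel (\<lambda>x. H x * of_real (g n x)) = 0" for n
    using g_orth[of n] unfolding set_lebesgue_integral_def H_def by simp
  ultimately have "integral\<^sup>L lborel (\<lambda>x. H x * of_real (G x)) = 0"
    by (simp add: LIMSEQ_const_iff)
  then show ?thesis unfolding set_lebesgue_integral_def H_def by simp
qed

lemma set_integral_superlevel_on_circle_eq_0:
  fixes \<psi> :: "complex \<Rightarrow> real"
  assumes h: "set_integrable lborel {-pi..pi} h"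
    and orth: "\<And>k. (LINT x:{-pi..pi}|lborel. h x * fourier_exp k x) = 0"
    and cont: "continuous_on (sphere 0 1) \<psi>"
  shows "(LINT x:{-pi..pi} \<inter> {x. c < \<psi> (cis x)}|lborel. h x) = 0"
proof -
  \<comment> \<open>Continuous functions on the circle converging pointwise to the indicator of the superlevel set.\<close>
  define \<phi> where "\<phi> n z = root n (min 1 (max 0 (\<psi> z - c)))" for n :: nat and z
  define S where "S = {x. c < \<psi> (cis x)}"
  have "continuous_on UNIV (\<lambda>x. \<psi> (cis x))"
    by (rule continuous_on_compose2[OF cont continuous_on_cis]) auto
  then have [measurable]: "(\<lambda>x. \<psi> (cis x)) \<in> borel_measurable borel"
    by (rule borel_measurable_continuous_onI)
  have bounded: "\<bar>\<phi> n z\<bar> \<le> 1" for n z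
  proof (cases "n = 0")
    case False
    then have "root n (min 1 (max 0 (\<psi> z - c))) \<le> root n 1" by simp
    then show ?thesis using False by (simp add: \<phi>_def)
  qed (simp add: \<phi>_def)
  have lim: "(\<lambda>n. \<phi> n (cis x)) \<longlonglongrightarrow> indicator S x" for x
  proof (cases "x \<in> S")
    case True
    then have "0 < min 1 (max 0 (\<psi> (cis x) - c))" unfolding S_def by simp
    from LIMSEQ_root_const[OF this] show ?thesis using True by (simp add: \<phi>_def)
  qed (simp add: \<phi>_def S_def)
  have orth_\<phi>: "(LINT x:{-pi..pi}|lborel. h x * of_real (\<phi> n (cis x))) = 0" for n
    using cont by (intro set_integral_continuous_on_circle_eq_0[OF h orth]) (simp add: \<phi>_def continuous_intros)
  have "(LINT x:{-pi..pi}|lborel. h x * of_real (indicator S x)) = 0"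
    by (rule set_integral_eq_0_if_bounded_tendsto[OF h _ _ bounded lim orth_\<phi>]) (simp_all add: \<phi>_def S_def)
  moreover have "indicator {-pi..pi} x *\<^sub>R (h x * of_real (indicator S x)) = indicator ({-pi..pi} \<inter> S) x *\<^sub>R h x" for x
    by (simp add: indicator_def)
  ultimately show ?thesis
    unfolding set_lebesgue_integral_def S_def by simp
qed

lemma arc_eq_cos_superlevel:
  fixes a x :: real
  assumes a: "-pi < a" "a < pi" and x: "-pi \<le> x" "x \<le> pi"
  shows "cos ((pi - a) / 2) < cos (x - (a + pi) / 2) \<longleftrightarrow> a < x \<and> x < pi"
proof -
  define y where "y = x - (a + pi) / 2"
  define d where "d = (pi - a) / 2"
  have d: "0 < d" "d < pi" using a unfolding d_def by auto
  have y: "- (2 * pi - d) \<le> y" "y \<le> d" using a x unfolding y_def d_def by (auto simp: field_simps)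
  have "cos d < cos y \<longleftrightarrow> \<bar>y\<bar> < d"
  proof
    assume "\<bar>y\<bar> < d"
    then have "cos d < cos \<bar>y\<bar>" using d by (intro cos_monotone_0_pi) auto
    then show "cos d < cos y" by simp
  next
    assume less: "cos d < cos y"
    show "\<bar>y\<bar> < d"
    proof (rule ccontr)
      assume "\<not> \<bar>y\<bar> < d"
      then consider "y = d" | "d \<le> -y" "-y \<le> pi" | "pi < -y" using y by linarith
      then have "cos y \<le> cos d"
      proof cases
        case 2
        then show ?thesis using d cos_monotone_0_pi_le[of d "-y"] by simp
      next
        case 3
        have "cos y = cos (2 * pi - (-y))" using cos_periodic[of y] by (simp add: add.commute)
        also have "\<dots> \<le> cos d" using d y 3 by (intro cos_monotone_0_pi_le) auto
        finally show ?thesis .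
      qed simp
      then show False using less by simp
    qed
  qed
  moreover have "\<bar>y\<bar> < d \<longleftrightarrow> a < x \<and> x < pi"
    using x unfolding y_def d_def by (auto simp: field_simps)
  ultimately show ?thesis unfolding y_def d_def by simp
qed

lemma set_integral_arc_eq_0:
  assumes h: "set_integrable lborel {-pi..pi} h"
    and orth: "\<And>k. (LINT x:{-pi..pi}|lborel. h x * fourier_exp k x) = 0"
    and a: "-pi < a" "a < pi"
  shows "(LINT x:{a<..<pi}|lborel. h x) = 0"
proof -
  define \<theta> where "\<theta> = (a + pi) / 2"
  define \<psi> where "\<psi> z = Re (z * cnj (cis \<theta>))" for z
  have \<psi>_cis: "\<psi> (cis x) = cos (x - \<theta>)" for x
    unfolding \<psi>_def by (simp add: cis_cnj cis_mult)
  have "continuous_on (sphere 0 1) \<psi>"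
    unfolding \<psi>_def by (intro continuous_intros)
  from set_integral_superlevel_on_circle_eq_0[OF h orth this, of "cos ((pi - a) / 2)"]
  have "(LINT x:{-pi..pi} \<inter> {x. cos ((pi - a) / 2) < \<psi> (cis x)}|lborel. h x) = 0" .
  moreover have "{-pi..pi} \<inter> {x. cos ((pi - a) / 2) < \<psi> (cis x)} = {a<..<pi}"
    using arc_eq_cos_superlevel[OF a] a unfolding \<psi>_cis \<theta>_def by auto
  ultimately show ?thesis by simp
qed

lemma ennreal_eq_ennreal_uminus_iff: "ennreal y = ennreal (- y) \<longleftrightarrow> y = 0"
  by (cases "0 \<le> y") (auto simp: ennreal_neg ennreal_eq_0_iff)

lemma AE_eq_0_if_integrals_greaterThan_eq_0_real:
  fixes g :: "real \<Rightarrow> real"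
  assumes g: "integrable lborel g"
    and tails: "\<And>b. integral\<^sup>L lborel (\<lambda>x. indicator {b<..} x * g x) = 0"
  shows "AE x in lborel. g x = 0"
proof -
  have [measurable]: "g \<in> borel_measurable lborel"
    using g by (rule borel_measurable_integrable)
  \<comment> \<open>The positive and negative parts of \<open>g\<close> are densities of measures agreeing on all tails.\<close>
  define pos where "pos b = (\<integral>\<^sup>+ x. ennreal (indicator {b<..} x * g x) \<partial>lborel)" for b
  define neg where "neg b = (\<integral>\<^sup>+ x. ennreal (- (indicator {b<..} x * g x)) \<partial>lborel)" for b
  have tail_integrable: "integrable lborel (\<lambda>x. indicator {b<..} x * g x)" for b
    using integrable_real_mult_indicator[OF _ g, of "{b<..}"] by (simp add: mult.commute)
  have pos_finite: "pos b < \<infinity>" and neg_finite: "neg b < \<infinity>" for b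
    unfolding pos_def neg_def using integrableD(2,3)[OF tail_integrable] by (auto simp: less_top)
  have "enn2real (pos b) = enn2real (neg b)" for b
    using real_lebesgue_integral_def[OF tail_integrable] tails unfolding pos_def neg_def by simp
  then have pos_neg: "pos b = neg b" for b
    using ennreal_enn2real[of "pos b"] ennreal_enn2real[of "neg b"] pos_finite[of b] neg_finite[of b]
    by simp
  have emeasure_tail: "emeasure (density lborel (\<lambda>x. ennreal (c * g x))) {b<..}
                       = (\<integral>\<^sup>+ x. ennreal (c * (indicator {b<..} x * g x)) \<partial>lborel)" for c b :: real
  proof -
    have "emeasure (density lborel (\<lambda>x. ennreal (c * g x))) {b<..}
        = (\<integral>\<^sup>+ x. ennreal (c * g x) * indicator {b<..} x \<partial>lborel)"
      by (rule emeasure_density) simp_all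
    also have "\<dots> = (\<integral>\<^sup>+ x. ennreal (c * (indicator {b<..} x * g x)) \<partial>lborel)"
      by (intro nn_integral_cong) (simp add: indicator_def)
    finally show ?thesis .
  qed
  have "density lborel (\<lambda>x. ennreal (g x)) = density lborel (\<lambda>x. ennreal (- g x))"
  proof (rule measure_eqI_lessThan)
    fix b
    have "emeasure (density lborel (\<lambda>x. ennreal (g x))) {b<..} = pos b"
      using emeasure_tail[of 1 b] by (simp add: pos_def)
    moreover have "emeasure (density lborel (\<lambda>x. ennreal (- g x))) {b<..} = neg b"
      using emeasure_tail[of "-1" b] by (simp add: neg_def)
    ultimately show "emeasure (density lborel (\<lambda>x. ennreal (g x))) {b<..} < \<infinity>"
      and "emeasure (density lborel (\<lambda>x. ennreal (g x))) {b<..}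
         = emeasure (density lborel (\<lambda>x. ennreal (- g x))) {b<..}"
      using pos_finite[of b] pos_neg[of b] by simp_all
  qed simp_all
  then have "AE x in lborel. ennreal (g x) = ennreal (- g x)"
    by (intro sigma_finite_measure.density_unique[OF sigma_finite_lborel]) auto
  then show ?thesis by (simp add: ennreal_eq_ennreal_uminus_iff)
qed

lemma AE_eq_0_if_integrals_greaterThan_eq_0:
  fixes g :: "real \<Rightarrow> complex"
  assumes g: "integrable lborel g"
    and tails: "\<And>b. (LINT x:{b<..}|lborel. g x) = 0"
  shows "AE x in lborel. g x = 0"
proof -
  have int: "integrable lborel (\<lambda>x. indicator {b<..} x *\<^sub>R g x)" for b
    using g by (intro integrable_mult_indicator) auto
  have "integral\<^sup>L lborel (\<lambda>x. indicator {b<..} x * Re (g x)) = 0"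
    and "integral\<^sup>L lborel (\<lambda>x. indicator {b<..} x * Im (g x)) = 0" for b
    using integral_Re[OF int] integral_Im[OF int] tails[of b]
    unfolding set_lebesgue_integral_def by simp_all
  then have "AE x in lborel. Re (g x) = 0" "AE x in lborel. Im (g x) = 0"
    using g by (auto intro!: AE_eq_0_if_integrals_greaterThan_eq_0_real integrable_Re integrable_Im)
  then show ?thesis by eventually_elim (simp add: complex_eq_iff)
qed

theorem AE_eq_0_if_orthogonal_fourier_exp:
  assumes h: "set_integrable lborel {-pi..pi} h"
    and orth: "\<And>k. (LINT x:{-pi..pi}|lborel. h x * fourier_exp k x) = 0"
  shows "AE x in lborel. x \<in> {-pi..pi} \<longrightarrow> h x = 0"
proof -
  have total: "(LINT x:{-pi..pi}|lborel. h x) = 0"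
    using orth[of 0] by simp
  have half_open: "(LINT x:{b<..pi}|lborel. h x) = 0" if "-pi \<le> b" "b < pi" for b
  proof (cases "b = -pi")
    case True
    have "(LINT x:{b<..pi}|lborel. h x) = (LINT x:{-pi..pi}|lborel. h x)"
      by (rule set_integral_discrete_difference[where X = "{-pi}"]) (use True in auto)
    then show ?thesis using total by simp
  next
    case False
    have "(LINT x:{b<..pi}|lborel. h x) = (LINT x:{b<..<pi}|lborel. h x)"
      by (rule set_integral_discrete_difference[where X = "{pi}"]) auto
    then show ?thesis using set_integral_arc_eq_0[OF h orth, of b] that False by simp
  qed
  have "(LINT x:{b<..} \<inter> {-pi..pi}|lborel. h x) = 0" for b
  proof -
    consider "b < -pi" | "-pi \<le> b" "b < pi" | "pi \<le> b" by linarith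
    then show ?thesis
    proof cases
      case 1
      then have "{b<..} \<inter> {-pi..pi} = {-pi..pi}" by auto
      then show ?thesis using total by simp
    next
      case 2
      then have "{b<..} \<inter> {-pi..pi} = {b<..pi}" by auto
      then show ?thesis using half_open 2 by simp
    next
      case 3
      then have "{b<..} \<inter> {-pi..pi} = {}" by auto
      then show ?thesis by (simp add: set_lebesgue_integral_def)
    qed
  qed
  then have "(LINT x:{b<..}|lborel. indicator {-pi..pi} x *\<^sub>R h x) = 0" for b
    unfolding set_lebesgue_integral_def by (simp add: indicator_inter_arith mult.assoc)
  with h have "AE x in lborel. indicator {-pi..pi} x *\<^sub>R h x = 0"
    unfolding set_integrable_def by (rule AE_eq_0_if_integrals_greaterThan_eq_0)
  then show ?thesis by eventually_elim (simp add: indicator_def)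
qed

section \<open>Kernels of the summation by parts\<close>

lemma norm_one_minus_cis_sq: "norm (1 - cis x) ^ 2 = 4 * sin (x / 2) ^ 2"
proof -
  have "norm (1 - cis x) ^ 2 = (1 - cos x) ^ 2 + (sin x) ^ 2"
    by (simp add: cmod_power2)
  also have "\<dots> = 2 - 2 * cos x"
    using sin_cos_squared_add[of x] by (simp add: power2_eq_square algebra_simps)
  also have "cos x = 1 - 2 * sin (x / 2) ^ 2"
    using cos_double_sin[of "x / 2"] by simp
  finally show ?thesis by simp
qed

lemma half_abs_le_abs_sin:
  fixes y :: real
  assumes "\<bar>y\<bar> \<le> pi / 2"
  shows "\<bar>y\<bar> / 2 \<le> \<bar>sin y\<bar>"
proof -
  have "(\<Sum>m<3. sin_coeff m * y ^ m) = y"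
    by (simp add: sin_coeff_def eval_nat_numeral)
  then have taylor: "\<bar>sin y - y\<bar> \<le> \<bar>y\<bar> ^ 3 / 6"
    using Maclaurin_sin_bound[of y 3] by (simp add: eval_nat_numeral divide_simps)
  have "\<bar>y\<bar> ^ 2 \<le> 1.6 ^ 2"
    using assms pi_approx by (intro power_mono) auto
  then have "\<bar>y\<bar> ^ 2 \<le> 3" by (simp add: power2_eq_square)
  then have "\<bar>y\<bar> * \<bar>y\<bar> ^ 2 / 6 \<le> \<bar>y\<bar> * 3 / 6"
    by (intro divide_right_mono mult_left_mono) auto
  then have "\<bar>sin y - y\<bar> \<le> \<bar>y\<bar> / 2"
    using taylor by (simp add: eval_nat_numeral)
  then show ?thesis by linarith
qed

lemma norm_one_minus_cis_ge:
  assumes "\<bar>x\<bar> \<le> pi"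
  shows "\<bar>x\<bar> / 2 \<le> norm (1 - cis x)"
proof -
  have "\<bar>x / 2\<bar> / 2 \<le> \<bar>sin (x / 2)\<bar>"
    using assms by (intro half_abs_le_abs_sin) auto
  then have "(\<bar>x\<bar> / 2) ^ 2 \<le> norm (1 - cis x) ^ 2"
    unfolding norm_one_minus_cis_sq using power_mono[of "\<bar>x\<bar> / 4" "\<bar>sin (x / 2)\<bar>" 2]
    by (simp add: power2_eq_square)
  then show ?thesis by (rule power2_le_imp_le) simp
qed

lemma norm_one_minus_cis_le: "norm (1 - cis x) \<le> \<bar>x\<bar>"
proof -
  have "\<bar>sin (x / 2)\<bar> ^ 2 \<le> \<bar>x / 2\<bar> ^ 2"
    by (intro power_mono abs_sin_x_le_abs_x) simp
  then have "norm (1 - cis x) ^ 2 \<le> \<bar>x\<bar> ^ 2"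
    unfolding norm_one_minus_cis_sq by (simp add: power2_eq_square)
  then show ?thesis by (rule power2_le_imp_le) simp
qed

lemma norm_sum_cis_power_le:
  assumes "x \<noteq> 0" "\<bar>x\<bar> \<le> pi"
  shows "norm (\<Sum>i<m. cis x ^ i) \<le> 4 / \<bar>x\<bar>"
proof -
  have lower: "\<bar>x\<bar> / 2 \<le> norm (1 - cis x)"
    using assms by (intro norm_one_minus_cis_ge)
  then have "cis x \<noteq> 1" using assms by auto
  then have "norm (\<Sum>i<m. cis x ^ i) = norm (cis x ^ m - 1) / norm (1 - cis x)"
    by (simp add: geometric_sum norm_divide norm_minus_commute)
  also have "\<dots> \<le> 2 / norm (1 - cis x)"
    using norm_triangle_ineq4[of "cis x ^ m" 1] by (intro divide_right_mono) (simp_all add: norm_power)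
  also have "\<dots> \<le> 2 / (\<bar>x\<bar> / 2)"
    using lower assms by (intro divide_left_mono mult_pos_pos) auto
  finally show ?thesis by simp
qed

lemma norm_sum_fourier_exp_le:
  assumes "x \<noteq> 0" "\<bar>x\<bar> \<le> pi"
  shows "norm (\<Sum>j\<in>{a..<b}. fourier_exp j x) \<le> 4 / \<bar>x\<bar>"
proof (cases "a \<le> b")
  case True
  have "{a..<b} = (\<lambda>i. a + int i) ` {..<nat (b - a)}"
    using True image_add_int_atLeastLessThan[of a b] image_atLeastZeroLessThan_int[of "b - a"]
    by (simp add: image_image add.commute)
  then have "(\<Sum>j\<in>{a..<b}. fourier_exp j x) = (\<Sum>i<nat (b - a). fourier_exp a x * cis x ^ i)"
    by (simp add: sum.reindex inj_on_def fourier_exp_mult[symmetric] fourier_exp_nat_power[symmetric])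
       (simp add: fourier_exp_def)
  also have "norm \<dots> \<le> 4 / \<bar>x\<bar>"
    using norm_sum_cis_power_le[OF assms] by (simp add: norm_mult flip: sum_distrib_left)
  finally show ?thesis .
qed (use assms in simp)

lemma set_integral_sum_continuous_on:
  fixes F :: "'i \<Rightarrow> real \<Rightarrow> 'a::{banach, second_countable_topology}"
  assumes "\<And>i. i \<in> I \<Longrightarrow> continuous_on {a..b} (F i)"
  shows "(LINT x:{a..b}|lborel. \<Sum>i\<in>I. F i x) = (\<Sum>i\<in>I. LINT x:{a..b}|lborel. F i x)"
  unfolding set_lebesgue_integral_def scaleR_sum_right
  using assms borel_integrable_atLeastAtMost' unfolding set_integrable_def
  by (intro Bochner_Integration.integral_sum) blast

definition abel_kernel :: "int \<Rightarrow> real \<Rightarrow> complex" where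
  "abel_kernel n x = (\<Sum>j\<in>{min 0 n..<max 0 (n + 1)}. fourier_exp j x)"

lemma continuous_on_abel_kernel [continuous_intros]: "continuous_on S (abel_kernel n)"
  unfolding abel_kernel_def by (intro continuous_intros)

lemma integral_abel_kernel_mult_fourier_exp:
  "(LINT x:{-pi..pi}|lborel. abel_kernel n x * fourier_exp (-j) x)
     = (if j \<in> {min 0 n..<max 0 (n + 1)} then 2 * pi else 0)"
proof -
  have "(LINT x:{-pi..pi}|lborel. abel_kernel n x * fourier_exp (-j) x)
      = (LINT x:{-pi..pi}|lborel. \<Sum>i\<in>{min 0 n..<max 0 (n + 1)}. fourier_exp (i - j) x)"
    by (simp add: abel_kernel_def sum_distrib_right fourier_exp_mult)
  also have "\<dots> = (\<Sum>i\<in>{min 0 n..<max 0 (n + 1)}. complex_of_real (if i = j then 2 * pi else 0))"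
    unfolding set_integral_sum_continuous_on[OF continuous_on_fourier_exp] integral_fourier_exp
    by (intro sum.cong) simp_all
  finally show ?thesis by (simp add: sum.delta flip: of_real_sum)
qed

lemma norm_abel_kernel_le:
  assumes "x \<noteq> 0" "\<bar>x\<bar> \<le> pi"
  shows "norm (abel_kernel n x) \<le> min (\<bar>n\<bar> + 1) (4 / \<bar>x\<bar>)"
proof -
  have "norm (abel_kernel n x) \<le> (\<Sum>j\<in>{min 0 n..<max 0 (n + 1)}. norm (fourier_exp j x))"
    unfolding abel_kernel_def by (rule norm_sum)
  also have "\<dots> \<le> \<bar>n\<bar> + 1" by simp
  finally show ?thesis
    using norm_sum_fourier_exp_le[OF assms] by (simp add: abel_kernel_def)
qed

definition dyadic_block :: "nat \<Rightarrow> int set" where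
  "dyadic_block k = {m. \<lfloor>(2::real) powr (real k - 1)\<rfloor> \<le> \<bar>m\<bar> \<and> \<bar>m\<bar> < 2 ^ k}"

lemma Theta_eq_sum_dyadic_block: "Theta f k = (\<Sum>m\<in>dyadic_block k. delta_coeff f m)"
  unfolding Theta_def dyadic_block_def ..

lemma dyadic_block_0: "dyadic_block 0 = {0}"
  by (auto simp: dyadic_block_def powr_minus_divide)

lemma dyadic_block_Suc: "dyadic_block (Suc k) = {m. 2 ^ k \<le> \<bar>m\<bar> \<and> \<bar>m\<bar> < 2 ^ Suc k}"
proof -
  have "(2::real) powr (real (Suc k) - 1) = of_int (2 ^ k)"
    by (simp add: powr_realpow)
  then show ?thesis unfolding dyadic_block_def by (simp only: floor_of_int)
qed

lemma finite_dyadic_block [simp]: "finite (dyadic_block k)"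
  by (rule finite_subset[of _ "{-(2 ^ k)..2 ^ k}"]) (auto simp: dyadic_block_def)

lemma abs_add_one_le_if_in_dyadic_block: "n \<in> dyadic_block k \<Longrightarrow> \<bar>n\<bar> + 1 \<le> 2 ^ k"
  unfolding dyadic_block_def by simp

lemma Union_dyadic_block: "(\<Union>k\<le>N. dyadic_block k) = {m. \<bar>m\<bar> < 2 ^ N}"
proof (induction N)
  case 0
  then show ?case by (auto simp: dyadic_block_0)
next
  case (Suc N)
  have "{m::int. \<bar>m\<bar> < 2 ^ Suc N} = {m. \<bar>m\<bar> < 2 ^ N} \<union> dyadic_block (Suc N)"
    by (auto simp: dyadic_block_Suc)
  then show ?case using Suc by (simp add: atMost_Suc Un_commute)
qed

lemma dyadic_block_disjoint:
  assumes "k < l"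
  shows "dyadic_block k \<inter> dyadic_block l = {}"
proof -
  obtain l' where l: "l = Suc l'" "k \<le> l'" using assms by (cases l) auto
  then have pow: "(2::int) ^ k \<le> 2 ^ l'" by (intro power_increasing) auto
  have False if "n \<in> dyadic_block k" "n \<in> dyadic_block l" for n
  proof -
    have "2 ^ l' \<le> \<bar>n\<bar>" using that(2) by (simp add: l dyadic_block_Suc)
    then show False using pow abs_add_one_le_if_in_dyadic_block[OF that(1)] by linarith
  qed
  then show ?thesis by blast
qed

lemma sum_over_dyadic_blocks:
  "(\<Sum>n\<in>{m. \<bar>m\<bar> < 2 ^ N}. F n) = (\<Sum>k\<le>N. \<Sum>n\<in>dyadic_block k. F n)"
proof -
  have "disjoint_family_on dyadic_block {..N}"
    unfolding disjoint_family_on_def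
    by (metis dyadic_block_disjoint Int_commute linorder_neqE_nat)
  then show ?thesis
    unfolding Union_dyadic_block[symmetric] by (subst sum.UNION_disjoint_family) auto
qed

section \<open>Summation by parts of the Fourier series\<close>

text \<open>The signed differences \<open>\<Delta>a\<^sub>n\<close>; at \<open>n = 0\<close> only the forward difference enters, while
  \<open>delta_coeff f 0\<close> also contains the backward one.\<close>

definition coeff_diff :: "(real \<Rightarrow> complex) \<Rightarrow> int \<Rightarrow> complex" where
  "coeff_diff f n = fourier_coeff f n - fourier_coeff f (if 0 \<le> n then n + 1 else n - 1)"

lemma norm_coeff_diff_le: "norm (coeff_diff f n) \<le> delta_coeff f n"
  unfolding coeff_diff_def delta_coeff_def by auto

lemma delta_coeff_nonneg: "0 \<le> delta_coeff f n"
  unfolding delta_coeff_def by auto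

lemma Theta_nonneg: "0 \<le> Theta f k"
  unfolding Theta_eq_sum_dyadic_block by (intro sum_nonneg delta_coeff_nonneg)

lemma sum_coeff_diff_nonneg:
  assumes "0 \<le> j" "j \<le> M"
  shows "(\<Sum>n\<in>{j..<M}. coeff_diff f n) = fourier_coeff f j - fourier_coeff f M"
  using assms(2)
proof (induction M rule: int_ge_induct)
  case (step M)
  have "{j..<M + 1} = insert M {j..<M}" using step.hyps by auto
  then show ?case using step assms(1) by (simp add: coeff_diff_def)
qed simp

lemma sum_coeff_diff_neg:
  assumes "j < 0" "M \<le> j"
  shows "(\<Sum>n\<in>{M<..j}. coeff_diff f n) = fourier_coeff f j - fourier_coeff f M"
  using assms(2)
proof (induction M rule: int_le_induct)
  case (step M)
  have "{M - 1<..j} = insert M {M<..j}" using step.hyps by auto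
  then show ?case using step assms(1) by (simp add: coeff_diff_def)
qed simp

definition block_sum :: "(real \<Rightarrow> complex) \<Rightarrow> nat \<Rightarrow> real \<Rightarrow> complex" where
  "block_sum f k x = (\<Sum>n\<in>dyadic_block k. coeff_diff f n * abel_kernel n x)"

definition abel_sum :: "(real \<Rightarrow> complex) \<Rightarrow> nat \<Rightarrow> real \<Rightarrow> complex" where
  "abel_sum f N x = (\<Sum>k\<le>N. block_sum f k x)"

lemma continuous_on_abel_sum [continuous_intros]: "continuous_on S (abel_sum f N)"
  unfolding abel_sum_def block_sum_def by (intro continuous_intros)

lemma norm_block_sum_le:
  assumes "x \<noteq> 0" "\<bar>x\<bar> \<le> pi"
  shows "norm (block_sum f k x) \<le> Theta f k * min (2 ^ k) (4 / \<bar>x\<bar>)"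
proof -
  have "norm (block_sum f k x) \<le> (\<Sum>n\<in>dyadic_block k. norm (coeff_diff f n * abel_kernel n x))"
    unfolding block_sum_def by (rule norm_sum)
  also have "\<dots> \<le> (\<Sum>n\<in>dyadic_block k. delta_coeff f n * min (2 ^ k) (4 / \<bar>x\<bar>))"
  proof (rule sum_mono)
    fix n assume "n \<in> dyadic_block k"
    then have "real_of_int (\<bar>n\<bar> + 1) \<le> real_of_int (2 ^ k)"
      by (simp only: of_int_le_iff abs_add_one_le_if_in_dyadic_block)
    then have "norm (abel_kernel n x) \<le> min (2 ^ k) (4 / \<bar>x\<bar>)"
      using norm_abel_kernel_le[OF assms, of n] by simp
    then show "norm (coeff_diff f n * abel_kernel n x) \<le> delta_coeff f n * min (2 ^ k) (4 / \<bar>x\<bar>)"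
      unfolding norm_mult by (intro mult_mono norm_coeff_diff_le) (auto simp: delta_coeff_nonneg)
  qed
  also have "\<dots> = Theta f k * min (2 ^ k) (4 / \<bar>x\<bar>)"
    unfolding Theta_eq_sum_dyadic_block by (simp add: sum_distrib_right)
  finally show ?thesis .
qed

lemma integral_abel_sum_mult_fourier_exp:
  assumes "\<bar>j\<bar> < 2 ^ N"
  shows "(LINT x:{-pi..pi}|lborel. abel_sum f N x * fourier_exp (-j) x)
           = 2 * pi * (fourier_coeff f j - fourier_coeff f (if 0 \<le> j then 2 ^ N else - (2 ^ N)))"
proof -
  let ?R = "\<lambda>n. {min 0 n..<max 0 (n + 1)}"
  have "(LINT x:{-pi..pi}|lborel. abel_sum f N x * fourier_exp (-j) x)
      = (LINT x:{-pi..pi}|lborel. \<Sum>n\<in>{m. \<bar>m\<bar> < 2 ^ N}. coeff_diff f n * (abel_kernel n x * fourier_exp (-j) x))"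
    unfolding abel_sum_def block_sum_def sum_over_dyadic_blocks[symmetric]
    by (simp add: sum_distrib_right mult.assoc)
  also have "\<dots> = (\<Sum>n\<in>{m. \<bar>m\<bar> < 2 ^ N}. coeff_diff f n * (if j \<in> ?R n then 2 * pi else 0))"
    by (simp add: set_integral_sum_continuous_on continuous_intros integral_abel_kernel_mult_fourier_exp)
  also have "\<dots> = 2 * pi * (\<Sum>n\<in>{m. \<bar>m\<bar> < 2 ^ N}. if j \<in> ?R n then coeff_diff f n else 0)"
    unfolding sum_distrib_left by (intro sum.cong) auto
  also have "(\<Sum>n\<in>{m. \<bar>m\<bar> < 2 ^ N}. if j \<in> ?R n then coeff_diff f n else 0)
           = (\<Sum>n\<in>(if 0 \<le> j then {j..<2 ^ N} else {- (2 ^ N)<..j}). coeff_diff f n)"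
  proof (rule sum.mono_neutral_cong_right)
    show "finite {m. \<bar>m\<bar> < (2::int) ^ N}"
      by (rule finite_subset[of _ "{- (2 ^ N)..2 ^ N}"]) auto
  qed (use assms in \<open>auto split: if_splits\<close>)
  also have "\<dots> = fourier_coeff f j - fourier_coeff f (if 0 \<le> j then 2 ^ N else - (2 ^ N))"
    using assms by (simp add: sum_coeff_diff_nonneg sum_coeff_diff_neg)
  finally show ?thesis .
qed

section \<open>A discrete Hardy inequality\<close>

lemma weighted_power_mean_le:
  fixes a y :: "'i \<Rightarrow> real"
  assumes S: "finite S" and a: "\<And>i. i \<in> S \<Longrightarrow> 0 \<le> a i" and y: "\<And>i. i \<in> S \<Longrightarrow> 0 \<le> y i"
    and p: "1 \<le> p"
  shows "(\<Sum>i\<in>S. a i * y i) powr p \<le> (\<Sum>i\<in>S. a i) powr (p - 1) * (\<Sum>i\<in>S. a i * y i powr p)"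
proof -
  \<comment> \<open>Jensen's inequality is applied on the terms with \<open>a i > 0\<close> and \<open>y i > 0\<close> only,
    since \<open>powr_convex\<close> is stated on the open half-line.\<close>
  define T where "T = {i \<in> S. 0 < a i \<and> 0 < y i}"
  define A where "A = (\<Sum>i\<in>T. a i)"
  have T: "finite T" "T \<subseteq> S" using S unfolding T_def by auto
  have sum_T: "(\<Sum>i\<in>S. a i * y i) = (\<Sum>i\<in>T. a i * y i)"
    using a y by (intro sum.mono_neutral_right[OF S]) (force simp: T_def)+
  have rhs_nonneg: "0 \<le> (\<Sum>i\<in>T. a i * y i powr p)"
    using a T by (intro sum_nonneg) auto
  show ?thesis
  proof (cases "T = {}")
    case True
    then show ?thesis using sum_T a by (simp add: sum_nonneg)
  next
    case False
    have A: "0 < A" unfolding A_def using False T by (intro sum_pos) (auto simp: T_def)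
    have "(\<Sum>i\<in>T. (a i / A) *\<^sub>R y i) powr p \<le> (\<Sum>i\<in>T. (a i / A) * y i powr p)"
      using A T_def by (intro convex_on_sum[OF T(1) False powr_convex[OF p]])
        (auto simp: A_def sum_divide_distrib[symmetric])
    moreover have "(\<Sum>i\<in>T. a i * y i) = A * (\<Sum>i\<in>T. (a i / A) *\<^sub>R y i)"
      using A by (simp add: sum_distrib_left)
    ultimately have "(\<Sum>i\<in>T. a i * y i) powr p \<le> A powr p * (\<Sum>i\<in>T. (a i / A) * y i powr p)"
      using A y T by (simp add: powr_mult sum_nonneg subset_iff mult_left_mono)
    also have "\<dots> = A powr (p - 1) * (\<Sum>i\<in>T. a i * y i powr p)"
      using A by (simp add: sum_distrib_left powr_diff field_simps)
    also have "\<dots> \<le> (\<Sum>i\<in>S. a i) powr (p - 1) * (\<Sum>i\<in>S. a i * y i powr p)"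
      using A T a y p rhs_nonneg S sum_mono2[OF S T(2), of a]
      by (intro mult_mono powr_mono2 sum_mono2) (auto simp: A_def)
    finally show ?thesis using sum_T by simp
  qed
qed

lemma sum_power_abs_diff_le:
  fixes \<rho> :: real
  assumes "0 \<le> \<rho>" "\<rho> < 1" "finite A"
  shows "(\<Sum>k\<in>A. \<rho> ^ nat \<bar>int j - int k\<bar>) \<le> 2 / (1 - \<rho>)"
proof -
  have geometric: "(\<Sum>i\<in>I. \<rho> ^ i) \<le> 1 / (1 - \<rho>)" if "finite I" for I
    using sum_le_suminf[of "\<lambda>i. \<rho> ^ i" I] suminf_geometric[of \<rho>] assms that by auto
  have "(\<Sum>k\<in>A. \<rho> ^ nat \<bar>int j - int k\<bar>)
      = (\<Sum>k\<in>A \<inter> {..j}. \<rho> ^ nat \<bar>int j - int k\<bar>) + (\<Sum>k\<in>A - {..j}. \<rho> ^ nat \<bar>int j - int k\<bar>)"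
    by (rule sum.Int_Diff[OF assms(3)])
  also have "\<dots> = (\<Sum>k\<in>A \<inter> {..j}. \<rho> ^ (j - k)) + (\<Sum>k\<in>A - {..j}. \<rho> ^ (k - j))"
    by (intro arg_cong2[where f = "(+)"] sum.cong) (auto simp: nat_diff_distrib)
  also have "\<dots> = (\<Sum>i\<in>(\<lambda>k. j - k) ` (A \<inter> {..j}). \<rho> ^ i) + (\<Sum>i\<in>(\<lambda>k. k - j) ` (A - {..j}). \<rho> ^ i)"
    by (subst (1 2) sum.reindex) (auto simp: inj_on_def)
  also have "\<dots> \<le> 1 / (1 - \<rho>) + 1 / (1 - \<rho>)"
    using assms(3) by (intro add_mono geometric) auto
  finally show ?thesis by simp
qed

definition hardy_ratio :: "real \<Rightarrow> real" where
  "hardy_ratio p = 2 powr (- min (1 / p) (1 - 1 / p))"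

definition hardy_const :: "real \<Rightarrow> real" where
  "hardy_const p = (2 / (1 - hardy_ratio p)) powr p"

lemma hardy_ratio_bounds:
  assumes "1 < p"
  shows "0 < hardy_ratio p" "hardy_ratio p < 1"
  using assms unfolding hardy_ratio_def by (auto intro!: powr_less_one simp: field_simps)

lemma hardy_const_pos: "1 < p \<Longrightarrow> 0 < hardy_const p"
  using hardy_ratio_bounds[of p] unfolding hardy_const_def by simp

lemma dyadic_exponent_le:
  assumes "1 < p"
  shows "real (min k j) - real j / p - real k * (1 - 1 / p)
           \<le> - min (1 / p) (1 - 1 / p) * real (nat \<bar>int j - int k\<bar>)"
proof (cases "k \<le> j")
  case True
  then have "real (min k j) - real j / p - real k * (1 - 1 / p) = - (1 / p) * real (nat \<bar>int j - int k\<bar>)"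
    by (simp add: of_nat_diff algebra_simps)
  moreover have "min (1 / p) (1 - 1 / p) * real (nat \<bar>int j - int k\<bar>) \<le> 1 / p * real (nat \<bar>int j - int k\<bar>)"
    by (intro mult_right_mono) simp_all
  ultimately show ?thesis by simp
next
  case False
  then have "real (min k j) - real j / p - real k * (1 - 1 / p)
           = - (1 - 1 / p) * real (nat \<bar>int j - int k\<bar>)"
    by (simp add: of_nat_diff algebra_simps)
  moreover have "min (1 / p) (1 - 1 / p) * real (nat \<bar>int j - int k\<bar>) \<le> (1 - 1 / p) * real (nat \<bar>int j - int k\<bar>)"
    by (intro mult_right_mono) simp_all
  ultimately show ?thesis by (simp add: algebra_simps)
qed

lemma dyadic_hardy_row_le:
  assumes p: "1 < p" and t: "\<And>k. 0 \<le> t k"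
  shows "2 powr (- real j / p) * (\<Sum>k\<le>N. t k * 2 ^ min k j)
           \<le> (\<Sum>k\<le>N. hardy_ratio p ^ nat \<bar>int j - int k\<bar> * (2 powr (real k * (1 - 1 / p)) * t k))"
proof -
  have "2 powr (- real j / p) * (\<Sum>k\<le>N. t k * 2 ^ min k j)
      = (\<Sum>k\<le>N. t k * 2 powr (real (min k j) - real j / p))"
    unfolding sum_distrib_left
    by (intro sum.cong) (simp_all add: powr_diff powr_realpow powr_minus divide_inverse mult.commute)
  also have "\<dots> \<le> (\<Sum>k\<le>N. t k * 2 powr (- min (1 / p) (1 - 1 / p) * real (nat \<bar>int j - int k\<bar>)
                                          + real k * (1 - 1 / p)))"
    using dyadic_exponent_le[OF p] t by (intro sum_mono mult_left_mono powr_mono) (auto simp: algebra_simps)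
  also have "\<dots> = (\<Sum>k\<le>N. hardy_ratio p ^ nat \<bar>int j - int k\<bar> * (2 powr (real k * (1 - 1 / p)) * t k))"
    unfolding hardy_ratio_def powr_add by (simp add: powr_power mult_ac)
  finally show ?thesis .
qed

theorem dyadic_hardy_inequality:
  assumes p: "1 < p" and t: "\<And>k. 0 \<le> t k"
  shows "(\<Sum>j<J. 2 powr (- real j) * (\<Sum>k\<le>N. t k * 2 ^ min k j) powr p)
           \<le> hardy_const p * (\<Sum>k\<le>N. (2 powr (real k * (1 - 1 / p)) * t k) powr p)"
proof -
  define \<rho> where "\<rho> = hardy_ratio p"
  define W where "W = 2 / (1 - \<rho>)"
  define u where "u k = 2 powr (real k * (1 - 1 / p)) * t k" for k
  define d where "d j k = \<rho> ^ nat \<bar>int j - int k\<bar>" for j k :: nat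
  have \<rho>: "0 < \<rho>" "\<rho> < 1" unfolding \<rho>_def using hardy_ratio_bounds[OF p] by auto
  have u: "0 \<le> u k" for k unfolding u_def using t by simp
  have d_sum: "(\<Sum>k\<in>A. d j k) \<le> W" "(\<Sum>k\<in>A. d k j) \<le> W" if "finite A" for A j
    unfolding d_def W_def using sum_power_abs_diff_le[OF _ _ that, of \<rho> j] \<rho>
    by (simp_all add: abs_minus_commute)
  have row: "2 powr (- real j) * (\<Sum>k\<le>N. t k * 2 ^ min k j) powr p
             \<le> W powr (p - 1) * (\<Sum>k\<le>N. d j k * u k powr p)" for j
  proof -
    have "2 powr (- real j) * (\<Sum>k\<le>N. t k * 2 ^ min k j) powr p
        = (2 powr (- real j / p) * (\<Sum>k\<le>N. t k * 2 ^ min k j)) powr p"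
      using p t by (simp add: powr_mult powr_powr sum_nonneg)
    also have "\<dots> \<le> (\<Sum>k\<le>N. d j k * u k) powr p"
      using dyadic_hardy_row_le[of p t j N, OF p t] t p
      by (intro powr_mono2) (auto simp: d_def u_def \<rho>_def intro!: sum_nonneg mult_nonneg_nonneg)
    also have "\<dots> \<le> (\<Sum>k\<le>N. d j k) powr (p - 1) * (\<Sum>k\<le>N. d j k * u k powr p)"
      using \<rho> u p by (intro weighted_power_mean_le) (auto simp: d_def)
    also have "\<dots> \<le> W powr (p - 1) * (\<Sum>k\<le>N. d j k * u k powr p)"
      using d_sum(1)[of "{..N}" j] \<rho> p
      by (intro mult_right_mono powr_mono2 sum_nonneg) (auto simp: d_def)
    finally show ?thesis .
  qed
  have "(\<Sum>j<J. 2 powr (- real j) * (\<Sum>k\<le>N. t k * 2 ^ min k j) powr p)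
      \<le> (\<Sum>j<J. W powr (p - 1) * (\<Sum>k\<le>N. d j k * u k powr p))"
    by (intro sum_mono row)
  also have "\<dots> = W powr (p - 1) * (\<Sum>k\<le>N. u k powr p * (\<Sum>j<J. d j k))"
    by (simp add: sum_distrib_left sum_distrib_right sum.swap[of _ "{..<J}"] mult_ac)
  also have "\<dots> \<le> W powr (p - 1) * (\<Sum>k\<le>N. u k powr p * W)"
    using d_sum(2) by (intro mult_left_mono sum_mono) auto
  also have "\<dots> = (W powr (p - 1) * W) * (\<Sum>k\<le>N. u k powr p)"
    by (simp add: sum_distrib_left sum_distrib_right mult_ac)
  also have "W powr (p - 1) * W = W powr p"
    using \<rho> by (simp add: W_def powr_diff)
  finally show ?thesis unfolding hardy_const_def W_def \<rho>_def u_def .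
qed

section \<open>The dyadic majorant and its \<open>L\<^sub>p\<close> norm\<close>

text \<open>At \<open>x = 0\<close> the junk value \<open>4 / 0 = 0\<close> makes the majorant vanish.\<close>

definition dyadic_majorant :: "(nat \<Rightarrow> real) \<Rightarrow> nat \<Rightarrow> real \<Rightarrow> real" where
  "dyadic_majorant t N x = (\<Sum>k\<le>N. t k * min (2 ^ k) (4 / \<bar>x\<bar>))"

lemma borel_measurable_dyadic_majorant [measurable]: "dyadic_majorant t N \<in> borel_measurable borel"
  unfolding dyadic_majorant_def by measurable

lemma dyadic_majorant_nonneg: "(\<And>k. 0 \<le> t k) \<Longrightarrow> 0 \<le> dyadic_majorant t N x"
  unfolding dyadic_majorant_def by (intro sum_nonneg) auto

lemma dyadic_majorant_mono: "(\<And>k. 0 \<le> t k) \<Longrightarrow> N \<le> M \<Longrightarrow> dyadic_majorant t N x \<le> dyadic_majorant t M x"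
  unfolding dyadic_majorant_def by (intro sum_mono2) auto

lemma dyadic_majorant_le_sum: "(\<And>k. 0 \<le> t k) \<Longrightarrow> dyadic_majorant t N x \<le> (\<Sum>k\<le>N. t k * 2 ^ k)"
  unfolding dyadic_majorant_def by (intro sum_mono mult_left_mono) auto

definition dyadic_shell :: "nat \<Rightarrow> real set" where
  "dyadic_shell j = {x. 4 / 2 ^ Suc j < \<bar>x\<bar> \<and> \<bar>x\<bar> \<le> 4 / 2 ^ j}"

lemma dyadic_majorant_le_on_shell:
  assumes t: "\<And>k. 0 \<le> t k" and x: "x \<in> dyadic_shell j"
  shows "dyadic_majorant t N x \<le> 2 * (\<Sum>k\<le>N. t k * 2 ^ min k j)"
proof -
  have "0 < (4::real) / 2 ^ Suc j" by simp
  then have "0 < \<bar>x\<bar>" using x unfolding dyadic_shell_def mem_Collect_eq by linarith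
  then have "4 / \<bar>x\<bar> < 2 ^ Suc j"
    using x by (simp add: dyadic_shell_def field_simps)
  then have "min (2 ^ k) (4 / \<bar>x\<bar>) \<le> 2 * 2 ^ min k j" for k :: nat
  proof (cases "k \<le> j")
    case True
    have "min k j = k" using True by simp
    then show ?thesis
      using min.cobounded1[of "(2::real) ^ k" "4 / \<bar>x\<bar>"] zero_le_power[of "2::real" k]
      by (simp only:) linarith
  next
    case False
    have "min k j = j" using False by simp
    then show ?thesis
      using min.cobounded2[of "(2::real) ^ k" "4 / \<bar>x\<bar>"] \<open>4 / \<bar>x\<bar> < 2 ^ Suc j\<close>
      by (simp only: power_Suc)
  qed
  then have "dyadic_majorant t N x \<le> (\<Sum>k\<le>N. t k * (2 * 2 ^ min k j))"
    unfolding dyadic_majorant_def using t by (intro sum_mono mult_left_mono) auto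
  then show ?thesis by (simp add: sum_distrib_left mult_ac)
qed

lemma dyadic_shells_cover:
  fixes x :: real
  assumes "0 < \<bar>x\<bar>" "\<bar>x\<bar> \<le> 4"
  shows "\<bar>x\<bar> \<le> 4 / 2 ^ J \<or> (\<exists>j<J. x \<in> dyadic_shell j)"
proof (induction J)
  case (Suc J)
  then show ?case
    by (cases "\<bar>x\<bar> \<le> 4 / 2 ^ Suc J") (auto simp: dyadic_shell_def intro: less_SucI)
qed (use assms in simp)

lemma dyadic_shell_eq: "dyadic_shell j = {- (4 / 2 ^ j)..<- (4 / 2 ^ Suc j)} \<union> {4 / 2 ^ Suc j<..4 / 2 ^ j}"
  unfolding dyadic_shell_def by auto

lemma measure_dyadic_shell: "measure lborel (dyadic_shell j) = 4 / 2 ^ j"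
  unfolding dyadic_shell_eq by (subst measure_Union) (auto simp: field_simps)

lemma integrable_dyadic_shell [simp]:
  "integrable lborel (\<lambda>x. indicator (dyadic_shell j) x * (c :: real))"
proof -
  have "emeasure lborel (dyadic_shell j) \<le> emeasure lborel {- (4 / 2 ^ j)..(4 / 2 ^ j :: real)}"
    by (rule emeasure_mono) (auto simp: dyadic_shell_def)
  then have "emeasure lborel (dyadic_shell j) < \<infinity>"
    by (simp add: ennreal_less_top order_le_less_trans)
  then show ?thesis
    by (intro integrable_mult_left integrable_real_indicator) (simp_all add: dyadic_shell_eq)
qed

lemma integral_dyadic_shell [simp]:
  "integral\<^sup>L lborel (\<lambda>x. indicator (dyadic_shell j) x * (c :: real)) = 4 / 2 ^ j * c"
  using measure_dyadic_shell[of j] by (simp add: dyadic_shell_eq)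

definition dyadic_step :: "(nat \<Rightarrow> real) \<Rightarrow> real \<Rightarrow> nat \<Rightarrow> real \<Rightarrow> real" where
  "dyadic_step c b J x = (\<Sum>j<J. indicator (dyadic_shell j) x * c j) + indicator {- (4 / 2 ^ J)..4 / 2 ^ J} x * b"

lemma integrable_dyadic_step: "integrable lborel (dyadic_step c b J)"
  and integral_dyadic_step: "integral\<^sup>L lborel (dyadic_step c b J) = (\<Sum>j<J. 4 / 2 ^ j * c j) + 8 / 2 ^ J * b"
proof -
  have shells: "integrable lborel (\<lambda>x. \<Sum>j<J. indicator (dyadic_shell j) x * c j)"
    by (intro Bochner_Integration.integrable_sum integrable_dyadic_shell)
  have box: "integrable lborel (\<lambda>x::real. indicator {- (4 / 2 ^ J)..4 / 2 ^ J} x * b)"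
    by (intro integrable_mult_left integrable_real_indicator) simp_all
  show "integrable lborel (dyadic_step c b J)"
    unfolding dyadic_step_def[abs_def] by (rule Bochner_Integration.integrable_add[OF shells box])
  have "integral\<^sup>L lborel (\<lambda>x. \<Sum>j<J. indicator (dyadic_shell j) x * c j) = (\<Sum>j<J. 4 / 2 ^ j * c j)"
    by (subst Bochner_Integration.integral_sum) (simp_all only: integrable_dyadic_shell integral_dyadic_shell)
  moreover have "integral\<^sup>L lborel (\<lambda>x::real. indicator {- (4 / 2 ^ J)..4 / 2 ^ J} x * b) = 8 / 2 ^ J * b"
    by simp
  ultimately show "integral\<^sup>L lborel (dyadic_step c b J) = (\<Sum>j<J. 4 / 2 ^ j * c j) + 8 / 2 ^ J * b"
    unfolding dyadic_step_def[abs_def] Bochner_Integration.integral_add[OF shells box] by simp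
qed

lemma dyadic_majorant_powr_le_step:
  assumes p: "1 < p" and t: "\<And>k. 0 \<le> t k"
  shows "indicator {-pi..pi} x * dyadic_majorant t N x powr p
           \<le> dyadic_step (\<lambda>j. (2 * (\<Sum>k\<le>N. t k * 2 ^ min k j)) powr p) ((\<Sum>k\<le>N. t k * 2 ^ k) powr p) J x"
    (is "_ \<le> dyadic_step ?c ?b J x")
proof -
  have step_nonneg: "0 \<le> dyadic_step ?c ?b J x"
    unfolding dyadic_step_def by (intro add_nonneg_nonneg sum_nonneg) auto
  consider "x \<notin> {-pi..pi} \<or> x = 0" | "\<bar>x\<bar> \<le> 4 / 2 ^ J" "x \<in> {-pi..pi}"
    | j where "j < J" "x \<in> dyadic_shell j"
    using dyadic_shells_cover[of x J] pi_less_4 by fastforce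
  then show ?thesis
  proof cases
    case 1
    then show ?thesis using step_nonneg by (auto simp: dyadic_majorant_def)
  next
    case 2
    have "dyadic_majorant t N x powr p \<le> ?b"
      using dyadic_majorant_le_sum dyadic_majorant_nonneg t p by (intro powr_mono2) auto
    also have "\<dots> \<le> dyadic_step ?c ?b J x"
      using 2 unfolding dyadic_step_def by (auto simp: abs_le_iff intro!: sum_nonneg)
    finally show ?thesis using 2 by simp
  next
    case 3
    have "dyadic_majorant t N x powr p \<le> ?c j"
      using dyadic_majorant_le_on_shell[OF t 3(2)] dyadic_majorant_nonneg t p by (intro powr_mono2) auto
    also have "\<dots> = indicator (dyadic_shell j) x * ?c j"
      using 3 by simp
    also have "\<dots> \<le> (\<Sum>j<J. indicator (dyadic_shell j) x * ?c j)"
      by (rule member_le_sum) (use 3 in auto)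
    also have "\<dots> \<le> dyadic_step ?c ?b J x" unfolding dyadic_step_def by simp
    finally show ?thesis using step_nonneg by (simp add: indicator_def)
  qed
qed

theorem dyadic_majorant_powr_integral_le:
  assumes p: "1 < p" and t: "\<And>k. 0 \<le> t k"
  shows "integrable lborel (\<lambda>x. indicator {-pi..pi} x * dyadic_majorant t N x powr p)" (is ?integrable)
    and "integral\<^sup>L lborel (\<lambda>x. indicator {-pi..pi} x * dyadic_majorant t N x powr p)
           \<le> 4 * 2 powr p * hardy_const p * (\<Sum>k\<le>N. (2 powr (real k * (1 - 1 / p)) * t k) powr p)"
      (is "?I \<le> ?C * ?U")
proof -
  define S where "S j = (\<Sum>k\<le>N. t k * 2 ^ min k j)" for j
  define B where "B = (\<Sum>k\<le>N. t k * 2 ^ k)"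
  have S_nonneg: "0 \<le> S j" for j
    unfolding S_def using t by (intro sum_nonneg) auto
  have below_step: "indicator {-pi..pi} x * dyadic_majorant t N x powr p
                      \<le> dyadic_step (\<lambda>j. (2 * S j) powr p) (B powr p) J x" for J x
    unfolding S_def B_def by (rule dyadic_majorant_powr_le_step[OF p t])
  show ?integrable
  proof (rule Bochner_Integration.integrable_bound[OF integrable_dyadic_step])
    show "AE x in lborel. norm (indicator {-pi..pi} x * dyadic_majorant t N x powr p)
                            \<le> norm (dyadic_step (\<lambda>j. (2 * S j) powr p) (B powr p) 0 x)"
    proof (rule AE_I2)
      fix x
      have "indicator {-pi..pi} x * dyadic_majorant t N x powr p
              \<le> \<bar>dyadic_step (\<lambda>j. (2 * S j) powr p) (B powr p) 0 x\<bar>"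
        using below_step[of x 0] by linarith
      then show "norm (indicator {-pi..pi} x * dyadic_majorant t N x powr p)
                   \<le> norm (dyadic_step (\<lambda>j. (2 * S j) powr p) (B powr p) 0 x)"
        by simp
    qed
  qed measurable
  have approx: "?I \<le> ?C * ?U + 8 / 2 ^ J * B powr p" for J
  proof -
    have "?I \<le> integral\<^sup>L lborel (dyadic_step (\<lambda>j. (2 * S j) powr p) (B powr p) J)"
      using below_step by (intro integral_mono \<open>?integrable\<close> integrable_dyadic_step)
    also have "\<dots> = (\<Sum>j<J. 4 / 2 ^ j * (2 * S j) powr p) + 8 / 2 ^ J * B powr p"
      by (rule integral_dyadic_step)
    also have "(\<Sum>j<J. 4 / 2 ^ j * (2 * S j) powr p) = 4 * 2 powr p * (\<Sum>j<J. 2 powr (- real j) * S j powr p)"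
      unfolding sum_distrib_left
      by (intro sum.cong refl) (simp add: S_nonneg powr_mult powr_minus powr_realpow divide_inverse)
    also have "\<dots> \<le> 4 * 2 powr p * (hardy_const p * ?U)"
      using dyadic_hardy_inequality[OF p t] unfolding S_def by (intro mult_left_mono) auto
    finally show ?thesis by (simp add: mult_ac)
  qed
  show "?I \<le> ?C * ?U"
  proof (rule field_le_epsilon)
    fix e :: real assume "0 < e"
    obtain J :: nat where "8 * B powr p / e < 2 ^ J"
      using real_arch_pow[of 2 "8 * B powr p / e"] by auto
    with \<open>0 < e\<close> have "8 / 2 ^ J * B powr p < e" by (simp add: field_simps)
    then show "?I \<le> ?C * ?U + e" using approx[of J] by linarith
  qed
qed

section \<open>Functions with \<open>I\<^sub>p(f) < \<infinity>\<close>\<close>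

lemma set_integral_const_divide:
  fixes a b d :: real
  assumes "0 < a" "a \<le> b"
  shows "(LINT x:{a..b}|lborel. d / x) = d * ln b - d * ln a"
proof -
  have "(LBINT x=a..b. d / x) = d * ln b - d * ln a"
  proof (rule interval_integral_FTC_finite)
    show "continuous_on {min a b..max a b} (\<lambda>x. d / x)"
      using assms by (auto intro!: continuous_intros)
    fix x assume "min a b \<le> x" "x \<le> max a b"
    then have "0 < x" using assms by auto
    then show "((\<lambda>x. d * ln x) has_vector_derivative d / x) (at x within {min a b..max a b})"
      by (auto intro!: derivative_eq_intros simp: has_real_derivative_iff_has_vector_derivative[symmetric])
  qed
  then show ?thesis using assms by (simp add: interval_integral_Icc)
qed

lemma const_eq_0_if_AE_mult_one_minus_cis_eq:
  fixes h :: "real \<Rightarrow> complex"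
  assumes h: "set_integrable lborel {-pi..pi} h"
    and eq: "AE x in lborel. x \<in> {-pi..pi} \<longrightarrow> h x * (1 - cis x) = D"
  shows "D = 0"
proof (rule ccontr)
  \<comment> \<open>Otherwise \<open>|h x| \<ge> |D| / |x|\<close>, whose integral over \<open>[e, pi]\<close> exceeds \<open>\<integral>|h|\<close>
    for the \<open>e\<close> chosen below.\<close>
  assume "D \<noteq> 0"
  define d where "d = norm D"
  define A where "A = (LINT x:{-pi..pi}|lborel. norm (h x))"
  define e where "e = pi * exp (- (A / d + 1))"
  have d: "0 < d" unfolding d_def using \<open>D \<noteq> 0\<close> by simp
  have h_norm: "set_integrable lborel {-pi..pi} (\<lambda>x. norm (h x))"
    using h by (rule set_integrable_norm)
  have "0 \<le> A" unfolding A_def set_lebesgue_integral_def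
    by (rule Bochner_Integration.integral_nonneg) auto
  then have "0 \<le> A / d" using d by simp
  then have "exp (- (A / d + 1)) < 1" by simp
  then have e: "0 < e" "e < pi" unfolding e_def by auto
  have h_norm_sub: "set_integrable lborel {e..pi} (\<lambda>x. norm (h x))"
    by (rule set_integrable_subset[OF h_norm]) (use e in auto)
  have "(LINT x:{e..pi}|lborel. d / x) \<le> (LINT x:{e..pi}|lborel. norm (h x))"
  proof (rule set_integral_mono_AE[OF _ h_norm_sub])
    show "set_integrable lborel {e..pi} (\<lambda>x. d / x)"
      using e by (intro borel_integrable_atLeastAtMost') (auto intro!: continuous_intros)
    show "AE x\<in>{e..pi} in lborel. d / x \<le> norm (h x)"
      using eq
    proof eventually_elim
      case (elim x)
      show ?case
      proof
        assume x: "x \<in> {e..pi}"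
        then have "0 < x" using e by auto
        have "d = norm (h x) * norm (1 - cis x)"
          using elim x e by (auto simp: d_def norm_mult)
        also have "\<dots> \<le> norm (h x) * x"
          using norm_one_minus_cis_le[of x] \<open>0 < x\<close> by (intro mult_left_mono) auto
        finally show "d / x \<le> norm (h x)" using \<open>0 < x\<close> by (simp add: divide_le_eq)
      qed
    qed
  qed
  also have "\<dots> \<le> A"
    unfolding A_def set_lebesgue_integral_def
    by (rule integral_mono[OF h_norm_sub[unfolded set_integrable_def] h_norm[unfolded set_integrable_def]])
       (use e in \<open>auto simp: indicator_def\<close>)
  also have "(LINT x:{e..pi}|lborel. d / x) = d * ln pi - d * ln e"
    using e by (intro set_integral_const_divide) auto
  finally have "d * ln pi - d * ln e \<le> A" .
  moreover have "d * ln pi - d * ln e = A + d"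
    using d unfolding e_def by (simp add: ln_mult algebra_simps)
  ultimately show False using d by linarith
qed

locale fourier_Ip_finite =
  fixes p :: real and f :: "real \<Rightarrow> complex"
  assumes p: "1 < p"
    and f_integrable: "set_integrable lborel {-pi..pi} f"
    and Ip_summable: "summable (Ip_term p f)"
begin

abbreviation "a \<equiv> fourier_coeff f"

lemma Ip_term_eq: "Ip_term p f k = (2 powr (real k * (1 - 1 / p)) * Theta f k) powr p"
proof -
  have "real k / conj_exp p = real k * (1 - 1 / p)"
    using p unfolding conj_exp_def by (simp add: field_simps)
  then show ?thesis unfolding Ip_term_def by simp
qed

lemma Ip_term_nonneg: "0 \<le> Ip_term p f k"
  unfolding Ip_term_def by simp

lemma Theta_summable: "summable (Theta f)"
proof -
  \<comment> \<open>The terms of the convergent series are bounded and \<open>\<Theta>\<^sub>k = 2\<^bsup>-k/p'\<^esup> (Ip_term p f k)\<^bsup>1/p\<^esup>\<close>.\<close>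
  obtain M where M: "\<And>k. Ip_term p f k \<le> M"
    using summable_LIMSEQ_zero[OF Ip_summable, THEN convergent_imp_bounded]
    by (auto simp: bounded_iff) (metis abs_le_D1 real_norm_def)
  define q where "q = 1 - 1 / p"
  have "0 < q" unfolding q_def using p by simp
  have bound: "Theta f k \<le> M powr (1 / p) * (2 powr (- q)) ^ k" for k
  proof -
    have "2 powr (real k * q) * Theta f k = Ip_term p f k powr (1 / p)"
      using p Theta_nonneg[of f k] unfolding Ip_term_eq q_def by (simp add: powr_powr)
    also have "\<dots> \<le> M powr (1 / p)"
      using M[of k] Ip_term_nonneg[of k] p by (intro powr_mono2) auto
    finally have "Theta f k \<le> 2 powr (- (real k * q)) * M powr (1 / p)"
      by (simp add: powr_minus field_simps)
    then show ?thesis by (simp add: powr_power mult_ac)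
  qed
  have "summable (\<lambda>k. M powr (1 / p) * (2 powr (- q)) ^ k)"
    using \<open>0 < q\<close> by (intro summable_mult summable_geometric) (auto intro: powr_less_one)
  then show ?thesis
    by (rule summable_comparison_test') (use bound Theta_nonneg in simp)
qed

definition majorant :: "real \<Rightarrow> real" where
  "majorant x = (\<Sum>k. Theta f k * min (2 ^ k) (4 / \<bar>x\<bar>))"

lemma majorant_summable: "summable (\<lambda>k. Theta f k * min (2 ^ k) (4 / \<bar>x\<bar>))"
proof (rule summable_comparison_test')
  show "summable (\<lambda>k. Theta f k * (4 / \<bar>x\<bar>))"
    by (intro summable_mult2 Theta_summable)
  show "norm (Theta f k * min (2 ^ k) (4 / \<bar>x\<bar>)) \<le> Theta f k * (4 / \<bar>x\<bar>)" for k
  proof -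
    have "0 \<le> min (2 ^ k) (4 / \<bar>x\<bar>)" by simp
    then have "norm (Theta f k * min (2 ^ k) (4 / \<bar>x\<bar>)) = Theta f k * min (2 ^ k) (4 / \<bar>x\<bar>)"
      using Theta_nonneg[of f k] by simp
    also have "\<dots> \<le> Theta f k * (4 / \<bar>x\<bar>)"
      using Theta_nonneg[of f k] by (intro mult_left_mono) simp_all
    finally show ?thesis .
  qed
qed

lemma dyadic_majorant_tendsto: "(\<lambda>N. dyadic_majorant (Theta f) N x) \<longlonglongrightarrow> majorant x"
  unfolding dyadic_majorant_def majorant_def using summable_LIMSEQ'[OF majorant_summable] .

lemma dyadic_majorant_le_majorant: "dyadic_majorant (Theta f) N x \<le> majorant x"
  unfolding dyadic_majorant_def majorant_def
  by (rule sum_le_suminf[OF majorant_summable]) (simp_all add: Theta_nonneg)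

lemma majorant_nonneg: "0 \<le> majorant x"
proof -
  have "0 \<le> dyadic_majorant (Theta f) 0 x"
    by (rule dyadic_majorant_nonneg) (rule Theta_nonneg)
  then show ?thesis using dyadic_majorant_le_majorant[where N = 0 and x = x] by linarith
qed

lemma borel_measurable_majorant [measurable]: "majorant \<in> borel_measurable borel"
  by (rule borel_measurable_LIMSEQ_metric[OF _ dyadic_majorant_tendsto]) measurable

lemma majorant_powr_integrable: "integrable lborel (\<lambda>x. indicator {-pi..pi} x * majorant x powr p)"
  and majorant_powr_integral_le:
    "integral\<^sup>L lborel (\<lambda>x. indicator {-pi..pi} x * majorant x powr p) \<le> 4 * 2 powr p * hardy_const p * (\<Sum>k. Ip_term p f k)"
proof -
  let ?F = "\<lambda>N x. indicator {-pi..pi} x * dyadic_majorant (Theta f) N x powr p"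
  define C where "C = 4 * 2 powr p * hardy_const p"
  have "0 < C" unfolding C_def using hardy_const_pos[OF p] by simp
  have F_integrable: "integrable lborel (?F N)" for N
    by (rule dyadic_majorant_powr_integral_le(1)[where t = "Theta f", OF p Theta_nonneg])
  have F_mono: "?F N x \<le> ?F M x" if "N \<le> M" for N M x
    using dyadic_majorant_mono[where t = "Theta f", OF Theta_nonneg that] dyadic_majorant_nonneg[where t = "Theta f", OF Theta_nonneg] p
    by (auto intro!: mult_left_mono powr_mono2 simp: indicator_def)
  have F_bound: "integral\<^sup>L lborel (?F N) \<le> C * (\<Sum>k. Ip_term p f k)" for N
  proof -
    have "integral\<^sup>L lborel (?F N) \<le> C * (\<Sum>k\<le>N. Ip_term p f k)"
      using dyadic_majorant_powr_integral_le(2)[where t = "Theta f", OF p Theta_nonneg] unfolding C_def Ip_term_eq .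
    also have "\<dots> \<le> C * (\<Sum>k. Ip_term p f k)"
      using \<open>0 < C\<close> by (intro mult_left_mono sum_le_suminf Ip_summable) (auto simp: Ip_term_nonneg)
    finally show ?thesis .
  qed
  have F_lim: "(\<lambda>N. ?F N x) \<longlonglongrightarrow> indicator {-pi..pi} x * majorant x powr p" for x
  proof (cases "majorant x = 0")
    case True
    then have "dyadic_majorant (Theta f) N x = 0" for N
      using dyadic_majorant_le_majorant[of N x] dyadic_majorant_nonneg[where t = "Theta f", OF Theta_nonneg, of N x] by simp
    then show ?thesis using True by simp
  next
    case False
    then show ?thesis
      by (intro tendsto_mult tendsto_const tendsto_powr dyadic_majorant_tendsto)
  qed
  have "incseq (\<lambda>N. integral\<^sup>L lborel (?F N))"
    by (intro incseq_SucI integral_mono F_integrable F_mono) simp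
  then obtain L where L: "(\<lambda>N. integral\<^sup>L lborel (?F N)) \<longlonglongrightarrow> L"
    using incseq_convergent F_bound by blast
  have mono: "AE x in lborel. mono (\<lambda>N. ?F N x)"
    by (intro AE_I2 monoI F_mono)
  have "integrable lborel (\<lambda>x. indicator {-pi..pi} x * majorant x powr p)
        \<and> integral\<^sup>L lborel (\<lambda>x. indicator {-pi..pi} x * majorant x powr p) = L"
    using integrable_monotone_convergence[OF F_integrable mono AE_I2[OF F_lim] L]
          integral_monotone_convergence[OF F_integrable mono AE_I2[OF F_lim] L] by simp
  moreover have "L \<le> C * (\<Sum>k. Ip_term p f k)"
    using L F_bound by (intro LIMSEQ_le_const2) auto
  ultimately show "integrable lborel (\<lambda>x. indicator {-pi..pi} x * majorant x powr p)"
    and "integral\<^sup>L lborel (\<lambda>x. indicator {-pi..pi} x * majorant x powr p) \<le> 4 * 2 powr p * hardy_const p * (\<Sum>k. Ip_term p f k)"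
    unfolding C_def by simp_all
qed

lemma majorant_set_integrable: "set_integrable lborel {-pi..pi} majorant"
  unfolding set_integrable_def
proof (rule Bochner_Integration.integrable_bound)
  show "integrable lborel (\<lambda>x. indicator {-pi..pi} x * 1 + indicator {-pi..pi} x * majorant x powr p)"
    by (intro Bochner_Integration.integrable_add majorant_powr_integrable integrable_mult_left
              integrable_real_indicator) auto
  have "majorant x \<le> 1 + majorant x powr p" for x
  proof (cases "majorant x \<le> 1")
    case False
    then have "majorant x powr 1 \<le> majorant x powr p" using p by (intro powr_mono) auto
    then show ?thesis using False by simp
  qed (use powr_ge_zero[of "majorant x" p] in linarith)
  then show "AE x in lborel. norm (indicator {-pi..pi} x *\<^sub>R majorant x)
                \<le> norm (indicator {-pi..pi} x * 1 + indicator {-pi..pi} x * majorant x powr p)"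
    using majorant_nonneg by (intro AE_I2) (simp add: indicator_def)
qed measurable

definition abel_limit :: "real \<Rightarrow> complex" where
  "abel_limit x = (if x \<in> {-pi..pi} - {0} then \<Sum>k. block_sum f k x else 0)"

lemma block_sum_summable:
  assumes "x \<in> {-pi..pi} - {0}"
  shows "summable (\<lambda>k. norm (block_sum f k x))"
proof (rule summable_comparison_test'[OF majorant_summable[of x]])
  show "norm (norm (block_sum f k x)) \<le> Theta f k * min (2 ^ k) (4 / \<bar>x\<bar>)" for k
    using assms norm_block_sum_le[of x f k] by (simp add: abs_le_iff)
qed

lemma abel_sum_tendsto:
  assumes "x \<in> {-pi..pi} - {0}"
  shows "(\<lambda>N. abel_sum f N x) \<longlonglongrightarrow> abel_limit x"
  using summable_LIMSEQ'[OF summable_norm_cancel[OF block_sum_summable[OF assms]]] assms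
  unfolding abel_sum_def abel_limit_def by simp

lemma norm_abel_sum_le:
  assumes "x \<in> {-pi..pi} - {0}"
  shows "norm (abel_sum f N x) \<le> majorant x"
proof -
  have "norm (abel_sum f N x) \<le> (\<Sum>k\<le>N. norm (block_sum f k x))"
    unfolding abel_sum_def by (rule norm_sum)
  also have "\<dots> \<le> dyadic_majorant (Theta f) N x"
    unfolding dyadic_majorant_def using assms by (intro sum_mono norm_block_sum_le) (auto simp: abs_le_iff)
  also have "\<dots> \<le> majorant x" by (rule dyadic_majorant_le_majorant)
  finally show ?thesis .
qed

lemma norm_abel_limit_le: "norm (abel_limit x) \<le> majorant x"
proof (cases "x \<in> {-pi..pi} - {0}")
  case True
  then show ?thesis
    using tendsto_norm[OF abel_sum_tendsto[OF True]] norm_abel_sum_le[OF True]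
    by (intro LIMSEQ_le_const2) auto
qed (auto simp: abel_limit_def majorant_nonneg)

lemma borel_measurable_abel_limit [measurable]: "abel_limit \<in> borel_measurable borel"
proof (rule borel_measurable_LIMSEQ_metric)
  show "(\<lambda>N. indicator ({-pi..pi} - {0}) x *\<^sub>R abel_sum f N x) \<longlonglongrightarrow> abel_limit x" for x
    using abel_sum_tendsto[of x] by (cases "x \<in> {-pi..pi} - {0}") (auto simp: abel_limit_def)
  have "abel_sum f N \<in> borel_measurable borel" for N
    by (intro borel_measurable_continuous_onI continuous_on_abel_sum)
  then show "(\<lambda>x. indicator ({-pi..pi} - {0}) x *\<^sub>R abel_sum f N x) \<in> borel_measurable borel" for N
    by measurable
qed

lemma abel_limit_set_integrable: "set_integrable lborel {-pi..pi} abel_limit"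
  unfolding set_integrable_def
proof (rule Bochner_Integration.integrable_bound)
  show "integrable lborel (\<lambda>x. indicator {-pi..pi} x *\<^sub>R majorant x)"
    using majorant_set_integrable unfolding set_integrable_def .
  show "AE x in lborel. norm (indicator {-pi..pi} x *\<^sub>R abel_limit x)
                          \<le> norm (indicator {-pi..pi} x *\<^sub>R majorant x)"
    using norm_abel_limit_le majorant_nonneg by (intro AE_I2) (simp add: indicator_def)
qed measurable

lemma fourier_coeff_abel_sum_tendsto:
  "(\<lambda>N. LINT x:{-pi..pi}|lborel. abel_sum f N x * fourier_exp (-j) x)
     \<longlonglongrightarrow> (LINT x:{-pi..pi}|lborel. abel_limit x * fourier_exp (-j) x)"
  unfolding set_lebesgue_integral_def
proof (rule integral_dominated_convergence[where w = "\<lambda>x. indicator {-pi..pi} x *\<^sub>R majorant x"])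
  show "integrable lborel (\<lambda>x. indicator {-pi..pi} x *\<^sub>R majorant x)"
    using majorant_set_integrable unfolding set_integrable_def .
  have "abel_sum f N \<in> borel_measurable borel" for N
    by (intro borel_measurable_continuous_onI continuous_on_abel_sum)
  then show "(\<lambda>x. indicator {-pi..pi} x *\<^sub>R (abel_sum f N x * fourier_exp (-j) x)) \<in> borel_measurable lborel" for N
    by measurable
  show "AE x in lborel. (\<lambda>N. indicator {-pi..pi} x *\<^sub>R (abel_sum f N x * fourier_exp (-j) x))
          \<longlonglongrightarrow> indicator {-pi..pi} x *\<^sub>R (abel_limit x * fourier_exp (-j) x)"
    using AE_lborel_singleton[of 0]
    by eventually_elim (auto simp: indicator_def intro!: tendsto_mult_right abel_sum_tendsto)
  show "AE x in lborel. norm (indicator {-pi..pi} x *\<^sub>R (abel_sum f N x * fourier_exp (-j) x))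
          \<le> indicator {-pi..pi} x *\<^sub>R majorant x" for N
    using AE_lborel_singleton[of 0]
    by eventually_elim (auto simp: indicator_def norm_mult intro!: norm_abel_sum_le)
qed measurable

lemma fourier_coeff_tendsto:
  "(\<lambda>N. a (if 0 \<le> j then 2 ^ N else - (2 ^ N))) \<longlonglongrightarrow> a j - fourier_coeff abel_limit j"
proof -
  have "\<bar>j\<bar> < 2 ^ N" if "nat \<bar>j\<bar> \<le> N" for N
  proof -
    have "\<bar>j\<bar> = int (nat \<bar>j\<bar>)" by simp
    also have "\<dots> < 2 ^ nat \<bar>j\<bar>" by (metis less_exp of_nat_less_iff of_nat_numeral of_nat_power)
    also have "\<dots> \<le> 2 ^ N" using that by (intro power_increasing) auto
    finally show ?thesis .
  qed
  then have "eventually (\<lambda>N. \<bar>j\<bar> < 2 ^ N) sequentially"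
    by (auto simp: eventually_sequentially)
  then have "eventually (\<lambda>N. a j - (LINT x:{-pi..pi}|lborel. abel_sum f N x * fourier_exp (-j) x) / (2 * pi)
                            = a (if 0 \<le> j then 2 ^ N else - (2 ^ N))) sequentially"
    by eventually_elim (simp add: integral_abel_sum_mult_fourier_exp)
  moreover have "(\<lambda>N. a j - (LINT x:{-pi..pi}|lborel. abel_sum f N x * fourier_exp (-j) x) / (2 * pi))
                   \<longlonglongrightarrow> a j - fourier_coeff abel_limit j"
    unfolding fourier_coeff_eq by (intro tendsto_intros fourier_coeff_abel_sum_tendsto) simp
  ultimately show ?thesis by (rule Lim_transform_eventually[rotated])
qed

definition remainder :: "real \<Rightarrow> complex" where
  "remainder x = f x - abel_limit x"

definition remainder_coeff :: "bool \<Rightarrow> complex" where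
  "remainder_coeff nonneg =
     (if nonneg then a 0 - fourier_coeff abel_limit 0 else a (-1) - fourier_coeff abel_limit (-1))"

lemma remainder_set_integrable: "set_integrable lborel {-pi..pi} remainder"
  unfolding remainder_def[abs_def] by (rule set_integral_diff(1)[OF f_integrable abel_limit_set_integrable])

lemma fourier_coeff_remainder: "fourier_coeff remainder j = remainder_coeff (0 \<le> j)"
proof -
  \<comment> \<open>The limit of \<open>a\<^bsub>\<plusminus>2\<^sup>N\<^esub>\<close> depends only on the sign of \<open>j\<close>.\<close>
  have "a j - fourier_coeff abel_limit j = remainder_coeff (0 \<le> j)"
  proof (cases "0 \<le> j")
    case True
    have "(\<lambda>N. a (2 ^ N)) \<longlonglongrightarrow> a j - fourier_coeff abel_limit j"
      and "(\<lambda>N. a (2 ^ N)) \<longlonglongrightarrow> a 0 - fourier_coeff abel_limit 0"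
      using fourier_coeff_tendsto[of j] fourier_coeff_tendsto[of 0] True by simp_all
    then show ?thesis using True by (simp add: remainder_coeff_def LIMSEQ_unique)
  next
    case False
    have "(\<lambda>N. a (- (2 ^ N))) \<longlonglongrightarrow> a j - fourier_coeff abel_limit j"
      and "(\<lambda>N. a (- (2 ^ N))) \<longlonglongrightarrow> a (-1) - fourier_coeff abel_limit (-1)"
      using fourier_coeff_tendsto[of j] fourier_coeff_tendsto[of "-1"] False by simp_all
    then show ?thesis using False by (simp add: remainder_coeff_def LIMSEQ_unique)
  qed
  then show ?thesis
    unfolding remainder_def[abs_def] by (simp add: fourier_coeff_diff f_integrable abel_limit_set_integrable)
qed

text \<open>Multiplication by \<open>1 - e\<^sup>i\<^sup>x\<close> turns the two constant coefficient sequences of the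
  remainder into a single jump at \<open>0\<close>.\<close>

lemma remainder_mult_one_minus_cis_orthogonal:
  defines "D \<equiv> remainder_coeff True - remainder_coeff False"
  shows "(LINT x:{-pi..pi}|lborel. (remainder x * (1 - cis x) - D) * fourier_exp k x) = 0"
proof -
  have hE: "set_integrable lborel {-pi..pi} (\<lambda>x. remainder x * fourier_exp k x)" for k
    by (rule set_integrable_mult_bounded[OF remainder_set_integrable]) auto
  have E: "set_integrable lborel {-pi..pi} (\<lambda>x. D * fourier_exp k x)" for k
    by (intro borel_integrable_atLeastAtMost' continuous_intros)
  have "cis x * fourier_exp k x = fourier_exp (k + 1) x" for x
    using fourier_exp_mult[of 1 x k] by (simp add: fourier_exp_def add.commute)
  then have "(\<lambda>x. (remainder x * (1 - cis x) - D) * fourier_exp k x)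
           = (\<lambda>x. (remainder x * fourier_exp k x - remainder x * fourier_exp (k + 1) x) - D * fourier_exp k x)"
    by (auto simp: fun_eq_iff algebra_simps)
  then have "(LINT x:{-pi..pi}|lborel. (remainder x * (1 - cis x) - D) * fourier_exp k x)
      = (LINT x:{-pi..pi}|lborel. remainder x * fourier_exp k x)
        - (LINT x:{-pi..pi}|lborel. remainder x * fourier_exp (k + 1) x)
        - (LINT x:{-pi..pi}|lborel. D * fourier_exp k x)"
    by (simp only: set_integral_diff(2)[OF set_integral_diff(1)[OF hE hE] E] set_integral_diff(2)[OF hE hE])
  also have "\<dots> = 2 * pi * (fourier_coeff remainder (-k) - fourier_coeff remainder (- k - 1)
                            - (if k = 0 then D else 0))"
    by (simp add: set_integral_mult_fourier_exp integral_fourier_exp ring_distribs)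
  also have "\<dots> = 0"
  proof (cases "k = 0")
    case False
    then have "(0 \<le> - k) = (0 \<le> - k - 1)" by linarith
    then show ?thesis using False by (simp add: fourier_coeff_remainder)
  qed (simp add: fourier_coeff_remainder D_def)
  finally show ?thesis .
qed

lemma AE_f_eq_abel_limit: "AE x in lborel. x \<in> {-pi..pi} \<longrightarrow> f x = abel_limit x"
proof -
  define D where "D = remainder_coeff True - remainder_coeff False"
  have "(\<lambda>x. 1 - cis x) \<in> borel_measurable lborel"
    unfolding measurable_lborel2 by (intro borel_measurable_continuous_onI continuous_intros)
  moreover have "norm (1 - cis x) \<le> 2" for x
    using norm_triangle_ineq4[of 1 "cis x"] by simp
  ultimately have "set_integrable lborel {-pi..pi} (\<lambda>x. remainder x * (1 - cis x))"
    by (rule set_integrable_mult_bounded[OF remainder_set_integrable])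
  then have "set_integrable lborel {-pi..pi} (\<lambda>x. remainder x * (1 - cis x) - D)"
    by (rule set_integral_diff(1)) (intro borel_integrable_atLeastAtMost' continuous_intros)
  then have "AE x in lborel. x \<in> {-pi..pi} \<longrightarrow> remainder x * (1 - cis x) - D = 0"
    using remainder_mult_one_minus_cis_orthogonal unfolding D_def
    by (intro AE_eq_0_if_orthogonal_fourier_exp)
  then have eq: "AE x in lborel. x \<in> {-pi..pi} \<longrightarrow> remainder x * (1 - cis x) = D"
    by simp
  then have "D = 0"
    by (rule const_eq_0_if_AE_mult_one_minus_cis_eq[OF remainder_set_integrable])
  show ?thesis
    using eq AE_lborel_singleton[of 0]
  proof eventually_elim
    case (elim x)
    show ?case
    proof
      assume x: "x \<in> {-pi..pi}"
      then have "\<bar>x\<bar> / 2 \<le> norm (1 - cis x)"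
        by (intro norm_one_minus_cis_ge) auto
      then have "1 - cis x \<noteq> 0" using elim by auto
      then show "f x = abel_limit x"
        using elim x \<open>D = 0\<close> by (simp add: remainder_def)
    qed
  qed
qed

lemma norm_powr_integrable: "integrable lborel (\<lambda>x. indicator {-pi..pi} x *\<^sub>R (norm (f x) powr p))"
  and norm_powr_integral_le:
    "(LINT x:{-pi..pi}|lborel. norm (f x) powr p) \<le> 4 * 2 powr p * hardy_const p * (\<Sum>k. Ip_term p f k)"
proof -
  have bound: "AE x in lborel. norm (indicator {-pi..pi} x *\<^sub>R (norm (f x) powr p))
                               \<le> norm (indicator {-pi..pi} x * majorant x powr p)"
    using AE_f_eq_abel_limit
  proof eventually_elim
    case (elim x)
    then show ?case
      using norm_abel_limit_le[of x] p by (auto simp: indicator_def intro: powr_mono2)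
  qed
  have "(\<lambda>x. indicator {-pi..pi} x *\<^sub>R f x) \<in> borel_measurable lborel"
    using f_integrable unfolding set_integrable_def by (rule borel_measurable_integrable)
  moreover have eq: "(\<lambda>x. indicator {-pi..pi} x *\<^sub>R (norm (f x) powr p))
                   = (\<lambda>x. norm (indicator {-pi..pi} x *\<^sub>R f x) powr p)"
    using p by (auto simp: indicator_def)
  ultimately have "(\<lambda>x. indicator {-pi..pi} x *\<^sub>R (norm (f x) powr p)) \<in> borel_measurable lborel"
    unfolding eq by measurable
  then show integrable: "integrable lborel (\<lambda>x. indicator {-pi..pi} x *\<^sub>R (norm (f x) powr p))"
    by (rule Bochner_Integration.integrable_bound[OF majorant_powr_integrable _ bound])
  have "(LINT x:{-pi..pi}|lborel. norm (f x) powr p)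
          \<le> integral\<^sup>L lborel (\<lambda>x. indicator {-pi..pi} x * majorant x powr p)"
    unfolding set_lebesgue_integral_def
    by (rule integral_mono_AE[OF integrable majorant_powr_integrable])
       (use bound in \<open>eventually_elim, auto simp: indicator_def\<close>)
  also have "\<dots> \<le> 4 * 2 powr p * hardy_const p * (\<Sum>k. Ip_term p f k)"
    by (rule majorant_powr_integral_le)
  finally show "(LINT x:{-pi..pi}|lborel. norm (f x) powr p) \<le> 4 * 2 powr p * hardy_const p * (\<Sum>k. Ip_term p f k)" .
qed

theorem in_Lp_and_Lp_norm_le: "in_Lp p f \<and> Lp_norm p f \<le> (4 * 2 powr p * hardy_const p) powr (1 / p) * Ip p f"
proof
  have "f \<in> borel_measurable (restrict_space lborel {-pi..pi})"
    using f_integrable by (subst (asm) set_integrable_eq) (auto intro: borel_measurable_integrable)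
  then show "in_Lp p f"
    unfolding in_Lp_def set_integrable_def using norm_powr_integrable by simp
  have "0 \<le> (LINT x:{-pi..pi}|lborel. norm (f x) powr p)"
    unfolding set_lebesgue_integral_def by (rule Bochner_Integration.integral_nonneg) auto
  then have "Lp_norm p f \<le> (4 * 2 powr p * hardy_const p * (\<Sum>k. Ip_term p f k)) powr (1 / p)"
    unfolding Lp_norm_def using norm_powr_integral_le p by (intro powr_mono2) auto
  also have "\<dots> = (4 * 2 powr p * hardy_const p) powr (1 / p) * Ip p f"
    using hardy_const_pos[OF p] Ip_summable Ip_term_nonneg
    by (simp add: Ip_def powr_mult suminf_nonneg)
  finally show "Lp_norm p f \<le> (4 * 2 powr p * hardy_const p) powr (1 / p) * Ip p f" .
qed

end

theorem mainTheorem8: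
  fixes p :: real
  assumes "1 < p"
  shows "\<exists>C>0. \<forall>f :: real \<Rightarrow> complex.
           set_integrable lborel {-pi..pi} f \<and> Ip_finite p f \<longrightarrow>
             in_Lp p f \<and> Lp_norm p f \<le> C * Ip p f"
proof -
  have "in_Lp p f \<and> Lp_norm p f \<le> (4 * 2 powr p * hardy_const p) powr (1 / p) * Ip p f"
    if "set_integrable lborel {-pi..pi} f" "Ip_finite p f" for f :: "real \<Rightarrow> complex"
  proof -
    interpret fourier_Ip_finite p f
      using assms that by unfold_locales (simp_all add: Ip_finite_def)
    show ?thesis by (rule in_Lp_and_Lp_norm_le)
  qed
  moreover have "0 < (4 * 2 powr p * hardy_const p) powr (1 / p)"
    using hardy_const_pos[OF assms] by simp
  ultimately show ?thesis by blast
qed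

end
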